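(* Let $a_1,\dots,a_n$ and $b_1,\dots,b_n$ be mutually commuting families of bosonic operators ($[a_i,a_j^\dagger]=[b_i,b_j^\dagger]=\delta_{ij}$, all other commutators among $a_i,a_i^\dagger,b_j,b_j^\dagger$ zero), and let $H=\sum_{i,j=1}^n\left(\alpha_{ij}a_i^\dagger a_j+\varepsilon_{ij}b_i^\dagger b_j+\gamma_{ij}a_i^\dagger b_j^\dagger+\gamma_{ji}^*a_ib_j\right)$ with $\alpha,\varepsilon$ complex Hermitian and $\gamma$ complex with $\gamma^T=\gamma$. Let $\psi=(a_1,\dots,a_n,b_1^\dagger,\dots,b_n^\dagger)^T$ and let $D$ be the $2n\times2n$ dynamic matrix determined by $[\psi_\mu,H]=\sum_\nu D_{\mu\nu}\psi_\nu$. Then $H$ is BV diagonalizable if and only if $D$ is physically diagonalizable.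
   Context: Here $H$ is called BV diagonalizable if there exist $2n$ operators $e_1,\dots,e_{2n}$, each a complex linear combination of $a_i,a_i^\dagger,b_i,b_i^\dagger$, satisfying the standard bosonic relations $[e_k,e_l^\dagger]=\delta_{kl}$, $[e_k,e_l]=0$, and real numbers $\lambda_1,\dots,\lambda_{2n},C$ with $H=\sum_k\lambda_ke_k^\dagger e_k+C$. A matrix is physically diagonalizable if it is diagonalizable over $\mathbb{C}$ and all its eigenvalues are real. *)

theory Defs
  imports Complex_Main "Jordan_Normal_Form.Matrix"
begin

text \<open>An abstract (unital, associative) complex *-algebra: a ring 'A together with a
  central unital ring embedding emb of the complex numbers (scalars act by
  left multiplication with emb c) and an involution st (the dagger).\<close>
definition complex_star_algebra :: "(complex \<Rightarrow> 'A::ring_1) \<Rightarrow> ('A \<Rightarrow> 'A) \<Rightarrow> bool" where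
  "complex_star_algebra emb st \<longleftrightarrow>
     emb 1 = 1 \<and>
     (\<forall>c d. emb (c + d) = emb c + emb d) \<and>
     (\<forall>c d. emb (c * d) = emb c * emb d) \<and>
     (\<forall>c x. emb c * x = x * emb c) \<and>
     (\<forall>x y. st (x + y) = st x + st y) \<and>
     (\<forall>x y. st (x * y) = st y * st x) \<and>
     (\<forall>x. st (st x) = x) \<and>
     (\<forall>c. st (emb c) = emb (cnj c))"

definition comm :: "'A::ring \<Rightarrow> 'A \<Rightarrow> 'A" where
  "comm x y = x * y - y * x"

definition kdelta :: "nat \<Rightarrow> nat \<Rightarrow> 'A::ring_1" where
  "kdelta i j = (if i = j then 1 else 0)"

definition bosonic_families ::
  "(complex \<Rightarrow> 'A::ring_1) \<Rightarrow> ('A \<Rightarrow> 'A) \<Rightarrow> nat \<Rightarrow> (nat \<Rightarrow> 'A) \<Rightarrow> (nat \<Rightarrow> 'A) \<Rightarrow> bool" where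
  "bosonic_families emb st n a b \<longleftrightarrow>
     (\<forall>i<n. \<forall>j<n.
        comm (a i) (st (a j)) = kdelta i j \<and>
        comm (b i) (st (b j)) = kdelta i j \<and>
        comm (a i) (a j) = 0 \<and>
        comm (b i) (b j) = 0 \<and>
        comm (a i) (b j) = 0 \<and>
        comm (a i) (st (b j)) = 0)"

definition hamiltonian ::
  "(complex \<Rightarrow> 'A::ring_1) \<Rightarrow> ('A \<Rightarrow> 'A) \<Rightarrow> nat \<Rightarrow> (nat \<Rightarrow> 'A) \<Rightarrow> (nat \<Rightarrow> 'A)
   \<Rightarrow> (nat \<Rightarrow> nat \<Rightarrow> complex) \<Rightarrow> (nat \<Rightarrow> nat \<Rightarrow> complex) \<Rightarrow> (nat \<Rightarrow> nat \<Rightarrow> complex) \<Rightarrow> 'A" where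
  "hamiltonian emb st n a b \<alpha> \<epsilon> \<gamma> =
     (\<Sum>i<n. \<Sum>j<n.
        emb (\<alpha> i j) * st (a i) * a j + emb (\<epsilon> i j) * st (b i) * b j
      + emb (\<gamma> i j) * st (a i) * st (b j) + emb (cnj (\<gamma> j i)) * a i * b j)"

definition psi :: "('A \<Rightarrow> 'A) \<Rightarrow> nat \<Rightarrow> (nat \<Rightarrow> 'A) \<Rightarrow> (nat \<Rightarrow> 'A) \<Rightarrow> nat \<Rightarrow> 'A" where
  "psi st n a b \<mu> = (if \<mu> < n then a \<mu> else st (b (\<mu> - n)))"

definition is_dynamic_matrix ::
  "(complex \<Rightarrow> 'A::ring_1) \<Rightarrow> ('A \<Rightarrow> 'A) \<Rightarrow> nat \<Rightarrow> (nat \<Rightarrow> 'A) \<Rightarrow> (nat \<Rightarrow> 'A) \<Rightarrow> 'A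
   \<Rightarrow> complex mat \<Rightarrow> bool" where
  "is_dynamic_matrix emb st n a b H D \<longleftrightarrow>
     D \<in> carrier_mat (2*n) (2*n) \<and>
     (\<forall>\<mu><2*n. comm (psi st n a b \<mu>) H = (\<Sum>\<nu><2*n. emb (D $$ (\<mu>,\<nu>)) * psi st n a b \<nu>))"

definition in_mode_span ::
  "(complex \<Rightarrow> 'A::ring_1) \<Rightarrow> ('A \<Rightarrow> 'A) \<Rightarrow> nat \<Rightarrow> (nat \<Rightarrow> 'A) \<Rightarrow> (nat \<Rightarrow> 'A) \<Rightarrow> 'A \<Rightarrow> bool" where
  "in_mode_span emb st n a b e \<longleftrightarrow>
     (\<exists>c1 c2 c3 c4 :: nat \<Rightarrow> complex.
        e = (\<Sum>i<n. emb (c1 i) * a i + emb (c2 i) * st (a i)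
                  + emb (c3 i) * b i + emb (c4 i) * st (b i)))"

definition BV_diagonalizable ::
  "(complex \<Rightarrow> 'A::ring_1) \<Rightarrow> ('A \<Rightarrow> 'A) \<Rightarrow> nat \<Rightarrow> (nat \<Rightarrow> 'A) \<Rightarrow> (nat \<Rightarrow> 'A) \<Rightarrow> 'A \<Rightarrow> bool" where
  "BV_diagonalizable emb st n a b H \<longleftrightarrow>
     (\<exists>(e :: nat \<Rightarrow> 'A) (lam :: nat \<Rightarrow> real) (C :: real).
        (\<forall>k<2*n. in_mode_span emb st n a b (e k)) \<and>
        (\<forall>k<2*n. \<forall>l<2*n. comm (e k) (st (e l)) = kdelta k l \<and> comm (e k) (e l) = 0) \<and>
        H = (\<Sum>k<2*n. emb (complex_of_real (lam k)) * st (e k) * e k) + emb (complex_of_real C))"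

definition physically_diagonalizable :: "complex mat \<Rightarrow> bool" where
  "physically_diagonalizable M \<longleftrightarrow>
     (\<exists>m. M \<in> carrier_mat m m \<and>
        (\<exists>\<Lambda> P Q. similar_mat_wit M \<Lambda> P Q \<and> diagonal_mat \<Lambda> \<and>
           (\<forall>i<m. \<Lambda> $$ (i,i) \<in> \<real>)))"

end

theory Submission
  imports Defs "Jordan_Normal_Form.Determinant"
begin

(* Write psi for the Nambu vector and eta = diag(1_n, -1_n). Then H = psi^+ M psi + const with
   M Hermitian and D = eta M, so D is self-adjoint for the indefinite form
   <x, y> = sum_mu x_mu eta_mu conj(y_mu). A mode e = sum_mu x_mu psi_mu + y_mu psi_mu^+ with
   [e, H] = lambda e corresponds to left eigenvectors x and conj y of D for lambda and -lambda, and
   the bosonic relations between modes become eta-orthonormality relations between these vectors.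

   Both directions pass through an eta-orthonormal eigenbasis w_k of D with <w_k, w_k> = +-1,
   which Gram-Schmidt for the indefinite form extracts from any spanning family of eigenvectors
   with real eigenvalues: eigenvectors for different eigenvalues are eta-orthogonal, and when all
   remaining vectors are isotropic, nondegeneracy of the form yields a non-isotropic sum of two
   of them. If D is physically diagonalizable, the rows of the diagonalizing matrix form such a
   family, and the eigenbasis gives H = sum_k +-lambda_k u_k^+ u_k + const with
   u_k = sum_mu w_k(mu) psi_mu, the modes of negative norm being replaced by their adjoints.
   If H is BV diagonalizable, inverting the Bogoliubov transformation shows that the vectors x_k
   and conj y_k span C^2n. *)

lemma sum_lessThan_double:
  fixes n :: nat
  shows "(\<Sum>\<mu><2*n. f \<mu>) = (\<Sum>i<n. f i) + (\<Sum>i<n. f (n + i))"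
proof -
  have "(\<Sum>\<mu><2*n. f \<mu>) = (\<Sum>\<mu><n. f \<mu>) + (\<Sum>\<mu>=n..<n+n. f \<mu>)"
    by (simp add: mult_2 sum.atLeastLessThan_concat[of 0 n "n+n", symmetric] lessThan_atLeast0)
  also have "(\<Sum>\<mu>=n..<n+n. f \<mu>) = (\<Sum>i<n. f (n + i))"
    by (simp add: sum.shift_bounds_nat_ivl[of f 0 n n, simplified] lessThan_atLeast0 add.commute)
  finally show ?thesis .
qed

lemma index_mult_mat_sum:
  assumes "A \<in> carrier_mat n k" "B \<in> carrier_mat k m" "i < n" "j < m"
  shows "(A * B) $$ (i, j) = (\<Sum>r<k. A $$ (i, r) * B $$ (r, j))"
  using assms by (simp add: scalar_prod_def atLeast0LessThan)

lemma index_mult_mat_mat: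
  assumes "i < n" "j < n"
  shows "(mat n n f * mat n n g) $$ (i, j) = (\<Sum>k<n. f (i, k) * g (k, j))"
  using assms by (simp add: scalar_prod_def atLeast0LessThan)

section \<open>Matrices self-adjoint for an indefinite form\<close>

(* Vectors are functions nat => complex of which only the values below N matter. *)
locale krein_selfadjoint =
  fixes N :: nat and eta :: "nat \<Rightarrow> complex" and D :: "complex mat"
  assumes D_carrier: "D \<in> carrier_mat N N"
    and eta_cases: "\<And>\<mu>. \<mu> < N \<Longrightarrow> eta \<mu> = 1 \<or> eta \<mu> = -1"
    and D_selfadjoint: "\<And>\<mu> \<nu>. \<mu> < N \<Longrightarrow> \<nu> < N \<Longrightarrow> D $$ (\<mu>, \<nu>) * eta \<nu> = cnj (D $$ (\<nu>, \<mu>) * eta \<mu>)"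
begin

definition kip :: "(nat \<Rightarrow> complex) \<Rightarrow> (nat \<Rightarrow> complex) \<Rightarrow> complex" where
  "kip x y = (\<Sum>\<mu><N. x \<mu> * eta \<mu> * cnj (y \<mu>))"

(* The zero vector counts as an eigenvector for every eigenvalue. *)
definition left_eigvec :: "(nat \<Rightarrow> complex) \<Rightarrow> real \<Rightarrow> bool" where
  "left_eigvec x l \<longleftrightarrow> (\<forall>\<nu><N. (\<Sum>\<mu><N. x \<mu> * D $$ (\<mu>, \<nu>)) = of_real l * x \<nu>)"

definition in_span :: "(nat \<Rightarrow> complex) set \<Rightarrow> (nat \<Rightarrow> complex) \<Rightarrow> bool" where
  "in_span S v \<longleftrightarrow> (\<exists>c. \<forall>\<nu><N. v \<nu> = (\<Sum>x\<in>S. c x * x \<nu>))"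

(* The last clause is the completeness relation of the basis. *)
definition krein_eigenbasis :: "(nat \<Rightarrow> nat \<Rightarrow> complex) \<Rightarrow> (nat \<Rightarrow> real) \<Rightarrow> bool" where
  "krein_eigenbasis w l \<longleftrightarrow>
     (\<forall>k<N. left_eigvec (w k) (l k)) \<and>
     (\<forall>k<N. kip (w k) (w k) = 1 \<or> kip (w k) (w k) = -1) \<and>
     (\<forall>k<N. \<forall>k'<N. k \<noteq> k' \<longrightarrow> kip (w k) (w k') = 0) \<and>
     (\<forall>\<nu><N. \<forall>\<mu><N. (\<Sum>k<N. kip (w k) (w k) * eta \<nu> * cnj (w k \<nu>) * w k \<mu>) = (if \<nu> = \<mu> then 1 else 0))"

lemma cnj_eta: "\<mu> < N \<Longrightarrow> cnj (eta \<mu>) = eta \<mu>"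
  using eta_cases[of \<mu>] by auto

lemma eta_nonzero: "\<mu> < N \<Longrightarrow> eta \<mu> \<noteq> 0"
  using eta_cases[of \<mu>] by auto

lemma kip_commute: "kip y x = cnj (kip x y)"
  unfolding kip_def by (auto intro!: sum.cong simp: cnj_eta)

lemma kip_add_scale_left: "kip (\<lambda>\<mu>. x \<mu> + c * y \<mu>) z = kip x z + c * kip y z"
  unfolding kip_def by (simp add: algebra_simps sum.distrib sum_distrib_left)

lemma kip_add_scale_right: "kip z (\<lambda>\<mu>. x \<mu> + c * y \<mu>) = kip z x + cnj c * kip z y"
  unfolding kip_def by (simp add: algebra_simps sum.distrib sum_distrib_left)

lemma kip_scale_left: "kip (\<lambda>\<mu>. c * y \<mu>) z = c * kip y z"
  unfolding kip_def by (simp add: algebra_simps sum_distrib_left)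

lemma kip_scale_right: "kip z (\<lambda>\<mu>. c * y \<mu>) = cnj c * kip z y"
  unfolding kip_def by (simp add: algebra_simps sum_distrib_left)

lemma kip_diff_scale_left: "kip (\<lambda>\<mu>. x \<mu> - c * y \<mu>) z = kip x z - c * kip y z"
  using kip_add_scale_left[of x "-c" y z] by simp

lemma kip_cong_left: "(\<And>\<nu>. \<nu> < N \<Longrightarrow> v \<nu> = w \<nu>) \<Longrightarrow> kip v z = kip w z"
  unfolding kip_def by simp

lemma kip_cong_right: "(\<And>\<nu>. \<nu> < N \<Longrightarrow> v \<nu> = w \<nu>) \<Longrightarrow> kip z v = kip z w"
  unfolding kip_def by simp

lemma kip_sum_left: "kip (\<lambda>\<mu>. \<Sum>x\<in>S. c x * x \<mu>) z = (\<Sum>x\<in>S. c x * kip x z)"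
proof -
  have "kip (\<lambda>\<mu>. \<Sum>x\<in>S. c x * x \<mu>) z = (\<Sum>\<mu><N. \<Sum>x\<in>S. c x * (x \<mu> * eta \<mu> * cnj (z \<mu>)))"
    unfolding kip_def by (simp add: sum_distrib_right mult.assoc)
  also have "\<dots> = (\<Sum>x\<in>S. \<Sum>\<mu><N. c x * (x \<mu> * eta \<mu> * cnj (z \<mu>)))" by (rule sum.swap)
  finally show ?thesis unfolding kip_def by (simp add: sum_distrib_left)
qed

lemma kip_sum_right: "kip z (\<lambda>\<mu>. \<Sum>x\<in>S. c x * x \<mu>) = (\<Sum>x\<in>S. cnj (c x) * kip z x)"
proof -
  have "kip z (\<lambda>\<mu>. \<Sum>x\<in>S. c x * x \<mu>) = (\<Sum>\<mu><N. \<Sum>x\<in>S. cnj (c x) * (z \<mu> * eta \<mu> * cnj (x \<mu>)))"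
    unfolding kip_def by (simp add: sum_distrib_left mult_ac)
  also have "\<dots> = (\<Sum>x\<in>S. \<Sum>\<mu><N. cnj (c x) * (z \<mu> * eta \<mu> * cnj (x \<mu>)))" by (rule sum.swap)
  finally show ?thesis unfolding kip_def by (simp add: sum_distrib_left)
qed

lemma kip_unit_left:
  assumes "\<nu> < N"
  shows "kip (\<lambda>\<mu>. if \<mu> = \<nu> then 1 else 0) z = eta \<nu> * cnj (z \<nu>)"
proof -
  have "kip (\<lambda>\<mu>. if \<mu> = \<nu> then 1 else 0) z = (\<Sum>\<mu><N. if \<mu> = \<nu> then eta \<nu> * cnj (z \<nu>) else 0)"
    unfolding kip_def by (rule sum.cong) auto
  then show ?thesis using assms by simp
qed

lemma kip_unit_right:
  assumes "\<nu> < N"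
  shows "kip z (\<lambda>\<mu>. if \<mu> = \<nu> then 1 else 0) = z \<nu> * eta \<nu>"
proof -
  have "kip z (\<lambda>\<mu>. if \<mu> = \<nu> then 1 else 0) = (\<Sum>\<mu><N. if \<mu> = \<nu> then z \<nu> * eta \<nu> else 0)"
    unfolding kip_def by (rule sum.cong) auto
  then show ?thesis using assms by simp
qed

lemma kip_normalize:
  assumes "kip r r \<noteq> 0"
  shows "\<exists>c. c \<noteq> 0 \<and>
    (kip (\<lambda>\<mu>. complex_of_real c * r \<mu>) (\<lambda>\<mu>. complex_of_real c * r \<mu>) = 1 \<or>
     kip (\<lambda>\<mu>. complex_of_real c * r \<mu>) (\<lambda>\<mu>. complex_of_real c * r \<mu>) = -1)"
proof -
  define q where "q = Re (kip r r)"
  have rr: "kip r r = of_real q"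
    unfolding q_def using kip_commute[of r r, symmetric] by (simp add: complex_eq_iff)
  with assms have q: "q \<noteq> 0" by auto
  define c where "c = 1 / sqrt \<bar>q\<bar>"
  have cc: "kip (\<lambda>\<mu>. complex_of_real c * r \<mu>) (\<lambda>\<mu>. complex_of_real c * r \<mu>) = of_real (c * c * q)"
    unfolding kip_scale_left kip_scale_right rr by simp
  have "c * c = 1 / \<bar>q\<bar>" unfolding c_def using q by (simp add: divide_simps)
  then have "c * c * q = 1 \<or> c * c * q = -1" using q by (cases "q > 0") auto
  then have "kip (\<lambda>\<mu>. complex_of_real c * r \<mu>) (\<lambda>\<mu>. complex_of_real c * r \<mu>) = 1 \<or>
      kip (\<lambda>\<mu>. complex_of_real c * r \<mu>) (\<lambda>\<mu>. complex_of_real c * r \<mu>) = -1"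
    unfolding cc by (metis of_real_1 of_real_minus)
  moreover have "c \<noteq> 0" unfolding c_def using q by simp
  ultimately show ?thesis by blast
qed

lemma kip_isotropic_add:
  assumes "kip r r = 0" "kip r' r' = 0"
  shows "kip (\<lambda>\<mu>. r \<mu> + kip r r' * r' \<mu>) (\<lambda>\<mu>. r \<mu> + kip r r' * r' \<mu>) = 2 * (kip r r' * cnj (kip r r'))"
proof -
  have "kip (\<lambda>\<mu>. r \<mu> + kip r r' * r' \<mu>) (\<lambda>\<mu>. r \<mu> + kip r r' * r' \<mu>)
      = kip r r + cnj (kip r r') * kip r r' + kip r r' * (kip r' r + cnj (kip r r') * kip r' r')"
    unfolding kip_add_scale_left kip_add_scale_right by (simp add: algebra_simps)
  also have "kip r' r = cnj (kip r r')" by (rule kip_commute)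
  finally show ?thesis using assms by (simp add: algebra_simps)
qed

lemma left_eigvec_eq_if_kip_nonzero:
  assumes x: "left_eigvec x l" and y: "left_eigvec y k" and nz: "kip x y \<noteq> 0"
  shows "l = k"
proof -
  define L where "L = (\<Sum>\<nu><N. (\<Sum>\<mu><N. x \<mu> * D $$ (\<mu>, \<nu>)) * (eta \<nu> * cnj (y \<nu>)))"
  have "L = (\<Sum>\<nu><N. of_real l * (x \<nu> * (eta \<nu> * cnj (y \<nu>))))"
    unfolding L_def using x unfolding left_eigvec_def by (intro sum.cong refl) (simp add: mult.assoc)
  also have "\<dots> = of_real l * kip x y" unfolding kip_def sum_distrib_left[symmetric] by (simp add: mult.assoc)
  finally have L1: "L = of_real l * kip x y" .
  have "L = (\<Sum>\<nu><N. \<Sum>\<mu><N. x \<mu> * (D $$ (\<mu>, \<nu>) * (eta \<nu> * cnj (y \<nu>))))"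
    unfolding L_def sum_distrib_right by (simp add: mult.assoc)
  also have "\<dots> = (\<Sum>\<mu><N. \<Sum>\<nu><N. x \<mu> * (D $$ (\<mu>, \<nu>) * (eta \<nu> * cnj (y \<nu>))))" by (rule sum.swap)
  also have "\<dots> = (\<Sum>\<mu><N. x \<mu> * (eta \<mu> * cnj (\<Sum>\<nu><N. y \<nu> * D $$ (\<nu>, \<mu>))))"
  proof (rule sum.cong[OF refl])
    fix \<mu> assume "\<mu> \<in> {..<N}"
    hence m: "\<mu> < N" by simp
    have "(\<Sum>\<nu><N. x \<mu> * (D $$ (\<mu>, \<nu>) * (eta \<nu> * cnj (y \<nu>))))
        = (\<Sum>\<nu><N. x \<mu> * (eta \<mu> * (cnj (y \<nu>) * cnj (D $$ (\<nu>, \<mu>)))))"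
    proof (rule sum.cong[OF refl])
      fix \<nu> assume "\<nu> \<in> {..<N}"
      hence "D $$ (\<mu>, \<nu>) * eta \<nu> = cnj (D $$ (\<nu>, \<mu>)) * eta \<mu>"
        using D_selfadjoint[OF m] cnj_eta[OF m] by simp
      thus "x \<mu> * (D $$ (\<mu>, \<nu>) * (eta \<nu> * cnj (y \<nu>))) = x \<mu> * (eta \<mu> * (cnj (y \<nu>) * cnj (D $$ (\<nu>, \<mu>))))"
        by (simp add: mult.assoc[symmetric])
    qed
    also have "\<dots> = x \<mu> * (eta \<mu> * cnj (\<Sum>\<nu><N. y \<nu> * D $$ (\<nu>, \<mu>)))"
      unfolding cnj_sum complex_cnj_mult sum_distrib_left ..
    finally show "(\<Sum>\<nu><N. x \<mu> * (D $$ (\<mu>, \<nu>) * (eta \<nu> * cnj (y \<nu>))))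
        = x \<mu> * (eta \<mu> * cnj (\<Sum>\<nu><N. y \<nu> * D $$ (\<nu>, \<mu>)))" .
  qed
  also have "\<dots> = (\<Sum>\<mu><N. of_real k * (x \<mu> * (eta \<mu> * cnj (y \<mu>))))"
    using y unfolding left_eigvec_def by (intro sum.cong refl) (simp add: mult.commute mult.left_commute)
  also have "\<dots> = of_real k * kip x y" unfolding kip_def sum_distrib_left[symmetric] by (simp add: mult.assoc)
  finally have "of_real l * kip x y = of_real k * kip x y" using L1 by simp
  with nz show ?thesis by simp
qed

lemma left_eigvec_scale:
  assumes "left_eigvec y l"
  shows "left_eigvec (\<lambda>\<mu>. c * y \<mu>) l"
  unfolding left_eigvec_def
proof (intro allI impI)
  fix \<nu> assume "\<nu> < N"
  have "(\<Sum>\<mu><N. c * y \<mu> * D $$ (\<mu>, \<nu>)) = c * (\<Sum>\<mu><N. y \<mu> * D $$ (\<mu>, \<nu>))"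
    by (simp add: sum_distrib_left mult.assoc)
  thus "(\<Sum>\<mu><N. c * y \<mu> * D $$ (\<mu>, \<nu>)) = of_real l * (c * y \<nu>)"
    using assms \<open>\<nu> < N\<close> unfolding left_eigvec_def by simp
qed

lemma left_eigvec_add:
  assumes "left_eigvec x l" "left_eigvec y l"
  shows "left_eigvec (\<lambda>\<mu>. x \<mu> + y \<mu>) l"
  using assms unfolding left_eigvec_def by (simp add: sum.distrib distrib_left distrib_right)

lemma left_eigvec_add_scale: "left_eigvec x l \<Longrightarrow> left_eigvec y l \<Longrightarrow> left_eigvec (\<lambda>\<mu>. x \<mu> + c * y \<mu>) l"
  using left_eigvec_add[of x l "\<lambda>\<mu>. c * y \<mu>"] left_eigvec_scale[of y l c] by simp

lemma in_span_mem:
  assumes "finite S" "x \<in> S"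
  shows "in_span S x"
  unfolding in_span_def
proof (rule exI[of _ "\<lambda>y. if y = x then 1 else 0"], intro allI impI)
  fix \<nu> assume "\<nu> < N"
  have "(\<Sum>y\<in>S. (if y = x then 1 else 0) * y \<nu>) = (\<Sum>y\<in>S. if y = x then x \<nu> else 0)"
    by (rule sum.cong) auto
  also have "\<dots> = x \<nu>" using assms by simp
  finally show "x \<nu> = (\<Sum>y\<in>S. (if y = x then 1 else 0) * y \<nu>)" by simp
qed

lemma in_span_add_scale: "in_span S x \<Longrightarrow> in_span S y \<Longrightarrow> in_span S (\<lambda>\<mu>. x \<mu> + d * y \<mu>)"
  unfolding in_span_def
proof (elim exE)
  fix c1 c2
  assume c1: "\<forall>\<nu><N. x \<nu> = (\<Sum>z\<in>S. c1 z * z \<nu>)" and c2: "\<forall>\<nu><N. y \<nu> = (\<Sum>z\<in>S. c2 z * z \<nu>)"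
  show "\<exists>c. \<forall>\<nu><N. x \<nu> + d * y \<nu> = (\<Sum>z\<in>S. c z * z \<nu>)"
    by (rule exI[of _ "\<lambda>z. c1 z + d * c2 z"]) (simp add: c1 c2 algebra_simps sum.distrib sum_distrib_left)
qed

lemma in_span_cong: "in_span S v \<Longrightarrow> (\<And>\<nu>. \<nu> < N \<Longrightarrow> v \<nu> = w \<nu>) \<Longrightarrow> in_span S w"
  unfolding in_span_def by auto

lemma in_span_zero: "(\<And>\<nu>. \<nu> < N \<Longrightarrow> v \<nu> = 0) \<Longrightarrow> in_span S v"
  unfolding in_span_def by (rule exI[of _ "\<lambda>_. 0"]) simp

lemma in_span_trans:
  assumes "\<forall>x\<in>S. in_span T x" "in_span S v"
  shows "in_span T v"
proof -
  obtain c where c: "\<forall>\<nu><N. v \<nu> = (\<Sum>x\<in>S. c x * x \<nu>)" using assms(2) unfolding in_span_def by blast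
  have "\<forall>x\<in>S. \<exists>d. \<forall>\<nu><N. x \<nu> = (\<Sum>y\<in>T. d y * y \<nu>)" using assms(1) unfolding in_span_def by blast
  then obtain d where d: "\<forall>x\<in>S. \<forall>\<nu><N. x \<nu> = (\<Sum>y\<in>T. d x y * y \<nu>)" by metis
  show ?thesis unfolding in_span_def
  proof (rule exI[of _ "\<lambda>y. \<Sum>x\<in>S. c x * d x y"], intro allI impI)
    fix \<nu> assume "\<nu> < N"
    have "v \<nu> = (\<Sum>x\<in>S. c x * (\<Sum>y\<in>T. d x y * y \<nu>))" using c d \<open>\<nu> < N\<close> by (auto intro!: sum.cong)
    also have "\<dots> = (\<Sum>y\<in>T. (\<Sum>x\<in>S. c x * d x y) * y \<nu>)"
      by (simp add: sum_distrib_left sum_distrib_right mult_ac) (rule sum.swap)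
    finally show "v \<nu> = (\<Sum>y\<in>T. (\<Sum>x\<in>S. c x * d x y) * y \<nu>)" .
  qed
qed

lemma in_span_lincomb:
  fixes K :: nat
  assumes v: "\<forall>\<nu><N. v \<nu> = (\<Sum>k<K. c k * f k \<nu>)"
  shows "in_span (f ` {..<K}) v"
proof -
  have "(K'::nat) \<le> K \<Longrightarrow> in_span (f ` {..<K}) (\<lambda>\<nu>. \<Sum>k<K'. c k * f k \<nu>)" for K'
  proof (induction K')
    case 0 show ?case by (rule in_span_zero) simp
  next
    case (Suc K')
    have a: "in_span (f ` {..<K}) (\<lambda>\<nu>. \<Sum>k<K'. c k * f k \<nu>)" using Suc by simp
    have b: "in_span (f ` {..<K}) (f K')" using Suc by (intro in_span_mem) auto
    from in_span_add_scale[OF a b, of "c K'"] show ?case by simp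
  qed
  from this[of K] show ?thesis by (rule in_span_cong) (use v in auto)
qed

lemma in_span_of_resolution:
  fixes K :: nat and g :: "nat \<Rightarrow> nat \<Rightarrow> complex"
  assumes "\<And>p q. p < N \<Longrightarrow> q < N \<Longrightarrow> (\<Sum>k<K. g k p * f k q) = (if p = q then 1 else 0)"
  shows "in_span (f ` {..<K}) v"
proof (rule in_span_lincomb[where c = "\<lambda>k. \<Sum>p<N. v p * g k p"], intro allI impI)
  fix q assume q: "q < N"
  have "(\<Sum>k<K. (\<Sum>p<N. v p * g k p) * f k q) = (\<Sum>k<K. \<Sum>p<N. v p * (g k p * f k q))"
    by (simp add: sum_distrib_right mult.assoc)
  also have "\<dots> = (\<Sum>p<N. \<Sum>k<K. v p * (g k p * f k q))" by (rule sum.swap)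
  also have "\<dots> = (\<Sum>p<N. v p * (if p = q then 1 else 0))"
    by (intro sum.cong refl) (simp add: assms q sum_distrib_left[symmetric])
  also have "\<dots> = v q" using q by (simp add: if_distrib[of "\<lambda>x. _ * x"] cong: if_cong)
  finally show "v q = (\<Sum>k<K. (\<Sum>p<N. v p * g k p) * f k q)" by simp
qed

lemma kip_nondegenerate:
  assumes span: "\<forall>v. in_span S v" and "\<nu> < N" "r \<nu> \<noteq> 0"
  shows "\<exists>x\<in>S. kip r x \<noteq> 0"
proof (rule ccontr)
  assume "\<not> (\<exists>x\<in>S. kip r x \<noteq> 0)"
  then have orth: "\<forall>x\<in>S. kip r x = 0" by blast
  obtain c where c: "\<forall>\<mu><N. (if \<mu> = \<nu> then 1 else 0) = (\<Sum>x\<in>S. c x * x \<mu>)"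
    using spec[OF span, of "\<lambda>\<mu>. if \<mu> = \<nu> then 1 else 0"] unfolding in_span_def by blast
  have "r \<nu> * eta \<nu> = kip r (\<lambda>\<mu>. if \<mu> = \<nu> then 1 else 0)" using kip_unit_right[OF \<open>\<nu> < N\<close>] by simp
  also have "\<dots> = kip r (\<lambda>\<mu>. \<Sum>x\<in>S. c x * x \<mu>)" by (rule kip_cong_right) (simp add: c)
  also have "\<dots> = 0" unfolding kip_sum_right using orth by simp
  finally have "r \<nu> * eta \<nu> = 0" .
  with assms(2,3) eta_nonzero show False by simp
qed

(* Invariant of the indefinite Gram-Schmidt procedure: W is the eta-orthonormal part found so
   far, R the remaining eigenvectors, eta-orthogonal to W. *)
definition partial_eigenbasis :: "(nat \<Rightarrow> complex) set \<Rightarrow> (nat \<Rightarrow> complex) set \<Rightarrow> bool" where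
  "partial_eigenbasis W R \<longleftrightarrow> finite W \<and> finite R \<and>
     (\<forall>w\<in>W. (\<exists>l. left_eigvec w l) \<and> (kip w w = 1 \<or> kip w w = -1)) \<and>
     (\<forall>w\<in>W. \<forall>w'\<in>W. w \<noteq> w' \<longrightarrow> kip w w' = 0) \<and>
     (\<forall>x\<in>R. \<exists>l. left_eigvec x l) \<and>
     (\<forall>w\<in>W. \<forall>x\<in>R. kip x w = 0) \<and>
     (\<forall>v. in_span (W \<union> R) v)"

lemma partial_eigenbasisD:
  assumes "partial_eigenbasis W R"
  shows "finite W" "finite R" "\<forall>w\<in>W. (\<exists>l. left_eigvec w l) \<and> (kip w w = 1 \<or> kip w w = -1)"
    "\<forall>w\<in>W. \<forall>w'\<in>W. w \<noteq> w' \<longrightarrow> kip w w' = 0" "\<forall>x\<in>R. \<exists>l. left_eigvec x l"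
    "\<forall>w\<in>W. \<forall>x\<in>R. kip x w = 0" "\<forall>v. in_span (W \<union> R) v"
  using assms unfolding partial_eigenbasis_def by blast+

lemma left_eigvec_project:
  assumes "left_eigvec y k" "left_eigvec r l"
  shows "\<exists>l'. left_eigvec (\<lambda>\<mu>. y \<mu> - (kip y r / kip r r) * r \<mu>) l'"
proof (cases "kip y r = 0")
  case True
  then show ?thesis using assms(1) by auto
next
  case False
  then have "k = l" using left_eigvec_eq_if_kip_nonzero[OF assms] by simp
  then show ?thesis using left_eigvec_add_scale[OF assms(1), of r "- (kip y r / kip r r)"] assms(2) by auto
qed

lemma in_span_split_off:
  assumes fin: "finite W" "finite R" and r: "r \<in> R" and c: "c \<noteq> 0"
    and span: "\<forall>v. in_span (W \<union> R) v"
  shows "in_span (insert (\<lambda>\<mu>. c * r \<mu>) W \<union> (\<lambda>y \<mu>. y \<mu> - t y * r \<mu>) ` (R - {r})) v"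
proof -
  define T where "T = insert (\<lambda>\<mu>. c * r \<mu>) W \<union> (\<lambda>y \<mu>. y \<mu> - t y * r \<mu>) ` (R - {r})"
  have fT: "finite T" unfolding T_def using fin by simp
  have cr: "in_span T (\<lambda>\<mu>. c * r \<mu>)" using fT by (rule in_span_mem) (simp add: T_def)
  have "in_span T (\<lambda>\<mu>. (\<lambda>_. 0) \<mu> + (1 / c) * (c * r \<mu>))"
    by (rule in_span_add_scale[OF in_span_zero cr]) simp
  then have rT: "in_span T r" by (rule in_span_cong) (simp add: c)
  have "in_span T x" if x: "x \<in> W \<union> R" for x
  proof -
    consider "x = r" | "x \<in> W" | "x \<in> R - {r}" using x by blast
    then show ?thesis
    proof cases
      case 1
      then show ?thesis using rT by simp
    next
      case 2
      then show ?thesis using fT by (intro in_span_mem) (auto simp: T_def)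
    next
      case 3
      then have "(\<lambda>\<mu>. x \<mu> - t x * r \<mu>) \<in> T" unfolding T_def by auto
      with fT have "in_span T (\<lambda>\<mu>. x \<mu> - t x * r \<mu>)" by (rule in_span_mem)
      from in_span_add_scale[OF this rT, of "t x"] show ?thesis by (rule in_span_cong) simp
    qed
  qed
  then show ?thesis unfolding T_def[symmetric] using span in_span_trans by blast
qed

lemma partial_eigenbasis_split_off:
  assumes P: "partial_eigenbasis W R" and r: "r \<in> R" and rr: "kip r r \<noteq> 0"
  shows "\<exists>W' R'. partial_eigenbasis W' R' \<and> card R' < card R"
proof -
  note U = partial_eigenbasisD[OF P]
  obtain c where c: "c \<noteq> 0" and w_norm: "kip (\<lambda>\<mu>. complex_of_real c * r \<mu>) (\<lambda>\<mu>. complex_of_real c * r \<mu>) = 1 \<or>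
      kip (\<lambda>\<mu>. complex_of_real c * r \<mu>) (\<lambda>\<mu>. complex_of_real c * r \<mu>) = -1"
    using kip_normalize[OF rr] by blast
  define w where "w = (\<lambda>\<mu>. complex_of_real c * r \<mu>)"
  define t where "t y = kip y r / kip r r" for y
  define W' where "W' = insert w W"
  define R' where "R' = (\<lambda>y \<mu>. y \<mu> - t y * r \<mu>) ` (R - {r})"
  obtain l where rl: "left_eigvec r l" using U(5) r by blast
  have w_orth: "kip w w0 = 0" "kip w0 w = 0" if "w0 \<in> W" for w0
    using U(6) r that kip_commute[of w0 w] unfolding w_def kip_scale_left by auto
  have "partial_eigenbasis W' R'" unfolding partial_eigenbasis_def
  proof (intro conjI)
    show "finite W'" "finite R'" unfolding W'_def R'_def using U(1,2) by simp_all
    show "\<forall>w\<in>W'. (\<exists>l. left_eigvec w l) \<and> (kip w w = 1 \<or> kip w w = -1)"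
      unfolding W'_def w_def using U(3) w_norm left_eigvec_scale[OF rl] by auto
    show "\<forall>u\<in>W'. \<forall>v\<in>W'. u \<noteq> v \<longrightarrow> kip u v = 0"
      unfolding W'_def using U(4) w_orth by auto
    show "\<forall>x\<in>R'. \<exists>l. left_eigvec x l"
      unfolding R'_def t_def using U(5) left_eigvec_project[OF _ rl] by blast
    have "kip (\<lambda>\<mu>. y \<mu> - t y * r \<mu>) w0 = 0" if "y \<in> R" "w0 \<in> W'" for y w0
    proof -
      have "kip (\<lambda>\<mu>. y \<mu> - t y * r \<mu>) w0 = kip y w0 - t y * kip r w0" by (rule kip_diff_scale_left)
      also have "\<dots> = 0" using that U(6) rr r by (auto simp: W'_def w_def kip_scale_right t_def)
      finally show ?thesis .
    qed
    then show "\<forall>w0\<in>W'. \<forall>x\<in>R'. kip x w0 = 0" unfolding R'_def by auto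
    show "\<forall>v. in_span (W' \<union> R') v"
      unfolding W'_def R'_def w_def
      using in_span_split_off[OF U(1,2) r _ U(7), of "complex_of_real c" t] c by simp
  qed
  moreover have "card R' < card R"
  proof -
    have "card R' \<le> card (R - {r})" unfolding R'_def by (rule card_image_le) (simp add: U(2))
    also have "\<dots> < card R" using U(2) r by (meson card_Diff1_less)
    finally show ?thesis .
  qed
  ultimately show ?thesis by blast
qed

lemma partial_eigenbasis_remove_zero:
  assumes P: "partial_eigenbasis W R" and z: "z \<in> R" and z0: "\<forall>\<nu><N. z \<nu> = 0"
  shows "partial_eigenbasis W (R - {z})"
proof -
  note U = partial_eigenbasisD[OF P]
  have fin: "finite (W \<union> (R - {z}))" using U by simp
  have "in_span (W \<union> (R - {z})) x" if "x \<in> W \<union> R" for x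
  proof (cases "x = z")
    case True thus ?thesis using z0 by (intro in_span_zero) auto
  next
    case False thus ?thesis using that fin by (intro in_span_mem) auto
  qed
  then have "\<forall>v. in_span (W \<union> (R - {z})) v" using U(7) in_span_trans[of "W \<union> R"] by blast
  then show ?thesis using U unfolding partial_eigenbasis_def by auto
qed

lemma partial_eigenbasis_mix_isotropic:
  assumes P: "partial_eigenbasis W R" and r: "r \<in> R" and "\<nu> < N" "r \<nu> \<noteq> 0"
    and iso: "\<forall>x\<in>R. kip x x = 0"
  shows "\<exists>R1. partial_eigenbasis W R1 \<and> card R1 \<le> card R \<and> (\<exists>r1\<in>R1. kip r1 r1 \<noteq> 0)"
proof -
  note U = partial_eigenbasisD[OF P]
  obtain r' where r': "r' \<in> R" "kip r r' \<noteq> 0"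
    using kip_nondegenerate[where r = r, OF U(7) assms(3,4)] U(6) r by blast
  obtain l where rl: "left_eigvec r l" using U(5) r by blast
  obtain l' where rl': "left_eigvec r' l'" using U(5) r' by blast
  have "l = l'" using left_eigvec_eq_if_kip_nonzero[OF rl rl' r'(2)] .
  define t where "t = kip r r'"
  define r1 where "r1 = (\<lambda>\<mu>. r \<mu> + t * r' \<mu>)"
  have r1_eig: "left_eigvec r1 l" unfolding r1_def using left_eigvec_add_scale[OF rl] rl' \<open>l = l'\<close> by simp
  have "kip r1 r1 = 2 * (t * cnj t)"
    unfolding r1_def t_def using kip_isotropic_add[of r r'] iso r r'(1) by simp
  then have r1_norm: "kip r1 r1 \<noteq> 0" using r'(2) unfolding t_def by simp
  define R1 where "R1 = insert r1 (R - {r})"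
  have fin: "finite (W \<union> R1)" using U unfolding R1_def by auto
  have "in_span (W \<union> R1) x" if "x \<in> W \<union> R" for x
  proof (cases "x = r")
    case True
    have a: "in_span (W \<union> R1) r1" using fin by (rule in_span_mem) (simp add: R1_def)
    have "r' \<noteq> r" using r' iso r by auto
    then have b: "in_span (W \<union> R1) r'" using in_span_mem[OF fin] r'(1) unfolding R1_def by blast
    from in_span_add_scale[OF a b, of "- t"] show ?thesis unfolding True
      by (rule in_span_cong) (simp add: r1_def)
  next
    case False thus ?thesis using that fin by (intro in_span_mem) (auto simp: R1_def)
  qed
  then have "\<forall>v. in_span (W \<union> R1) v" using U(7) in_span_trans[of "W \<union> R"] by blast
  then have "partial_eigenbasis W R1"
    using U r1_eig r r'(1) unfolding partial_eigenbasis_def R1_def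
    by (auto simp: r1_def kip_add_scale_left)
  moreover have "card R1 \<le> card R"
  proof -
    have "card R1 \<le> Suc (card (R - {r}))" unfolding R1_def using U(2) by (simp add: card_insert_if)
    also have "\<dots> = card R" using card.remove[OF U(2) r] by simp
    finally show ?thesis .
  qed
  moreover have "r1 \<in> R1" unfolding R1_def by simp
  ultimately show ?thesis using r1_norm by blast
qed

lemma partial_eigenbasis_complete: "partial_eigenbasis W R \<Longrightarrow> \<exists>W'. partial_eigenbasis W' {}"
proof (induction "card R" arbitrary: W R rule: less_induct)
  case less
  note U = partial_eigenbasisD[OF less.prems]
  consider "R = {}" | z where "z \<in> R" "\<forall>\<nu><N. z \<nu> = 0" | x where "x \<in> R" "kip x x \<noteq> 0"
    | r \<nu> where "r \<in> R" "\<nu> < N" "r \<nu> \<noteq> 0" "\<forall>x\<in>R. kip x x = 0"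
    by blast
  then show ?case
  proof cases
    case 1
    then show ?thesis using less.prems by blast
  next
    case (2 z)
    have "card (R - {z}) < card R" using U(2) 2(1) by (meson card_Diff1_less)
    then show ?thesis using less.hyps partial_eigenbasis_remove_zero[OF less.prems 2] by blast
  next
    case (3 x)
    from partial_eigenbasis_split_off[OF less.prems 3] obtain W' R' where
      "partial_eigenbasis W' R'" "card R' < card R" by blast
    then show ?thesis using less.hyps by blast
  next
    case (4 r \<nu>)
    from partial_eigenbasis_mix_isotropic[OF less.prems 4] obtain R1 r1 where
      R1: "partial_eigenbasis W R1" "card R1 \<le> card R" "r1 \<in> R1" "kip r1 r1 \<noteq> 0" by blast
    from partial_eigenbasis_split_off[OF R1(1,3,4)] obtain W' R' where
      "partial_eigenbasis W' R'" "card R' < card R1" by blast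
    then show ?thesis using less.hyps R1(2) by (meson order_less_le_trans)
  qed
qed

lemma partial_eigenbasis_resolution:
  assumes P: "partial_eigenbasis W {}" and "\<nu> < N" "\<mu> < N"
  shows "(\<Sum>w\<in>W. kip w w * eta \<nu> * cnj (w \<nu>) * w \<mu>) = (if \<nu> = \<mu> then 1 else 0)"
proof -
  note U = partial_eigenbasisD[OF P]
  obtain c where c: "\<forall>\<mu><N. (if \<mu> = \<nu> then 1 else 0) = (\<Sum>x\<in>W. c x * x \<mu>)"
    using spec[OF U(7), of "\<lambda>\<mu>. if \<mu> = \<nu> then 1 else 0"] unfolding in_span_def by auto
  have cw: "c w = kip w w * eta \<nu> * cnj (w \<nu>)" if w: "w \<in> W" for w
  proof -
    have "eta \<nu> * cnj (w \<nu>) = kip (\<lambda>\<mu>. if \<mu> = \<nu> then 1 else 0) w" using kip_unit_left[OF \<open>\<nu> < N\<close>] by simp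
    also have "\<dots> = kip (\<lambda>\<mu>. \<Sum>x\<in>W. c x * x \<mu>) w" by (rule kip_cong_left) (simp add: c)
    also have "\<dots> = (\<Sum>x\<in>W. c x * kip x w)" by (rule kip_sum_left)
    also have "\<dots> = (\<Sum>x\<in>W. if x = w then c w * kip w w else 0)"
      by (rule sum.cong[OF refl]) (use U(4) w in auto)
    also have "\<dots> = c w * kip w w" using U(1) w by simp
    finally have "kip w w * (eta \<nu> * cnj (w \<nu>)) = c w * (kip w w * kip w w)" by simp
    moreover have "kip w w * kip w w = 1" using U(3) w by auto
    ultimately show ?thesis by (simp add: mult_ac)
  qed
  have "(if \<mu> = \<nu> then 1 else 0) = (\<Sum>x\<in>W. c x * x \<mu>)" using c \<open>\<mu> < N\<close> by blast
  also have "\<dots> = (\<Sum>w\<in>W. kip w w * eta \<nu> * cnj (w \<nu>) * w \<mu>)" by (rule sum.cong) (simp_all add: cw)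
  finally show ?thesis by auto
qed

lemma card_partial_eigenbasis:
  assumes P: "partial_eigenbasis W {}"
  shows "card W = N"
proof -
  note U = partial_eigenbasisD[OF P]
  have "of_nat N = (\<Sum>\<nu><N. (1::complex))" by simp
  also have "\<dots> = (\<Sum>\<nu><N. \<Sum>w\<in>W. kip w w * eta \<nu> * cnj (w \<nu>) * w \<nu>)"
    by (rule sum.cong) (simp_all add: partial_eigenbasis_resolution[OF P])
  also have "\<dots> = (\<Sum>w\<in>W. \<Sum>\<nu><N. kip w w * eta \<nu> * cnj (w \<nu>) * w \<nu>)" by (rule sum.swap)
  also have "\<dots> = (\<Sum>w\<in>W. kip w w * kip w w)"
    by (rule sum.cong[OF refl]) (simp add: kip_def sum_distrib_left mult_ac)
  also have "\<dots> = (\<Sum>w\<in>W. 1)" using U(3) by (intro sum.cong) auto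
  also have "\<dots> = of_nat (card W)" by simp
  finally show ?thesis by (metis of_nat_eq_iff)
qed

lemma krein_eigenbasis_exists:
  assumes "finite S" "\<forall>x\<in>S. \<exists>l. left_eigvec x l" "\<forall>v. in_span S v"
  shows "\<exists>w l. krein_eigenbasis w l"
proof -
  have "partial_eigenbasis {} S" unfolding partial_eigenbasis_def using assms by auto
  from partial_eigenbasis_complete[OF this] obtain W where P: "partial_eigenbasis W {}" by blast
  note U = partial_eigenbasisD[OF P]
  obtain g where g: "bij_betw g {..<N} W"
    using ex_bij_betw_nat_finite[OF U(1)] card_partial_eigenbasis[OF P] by (auto simp: atLeast0LessThan)
  have gW: "g k \<in> W" if "k < N" for k using g that bij_betwE by blast
  define l where "l k = (SOME l. left_eigvec (g k) l)" for k
  have "left_eigvec (g k) (l k)" if "k < N" for k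
    unfolding l_def using U(3) gW[OF that] by (metis someI_ex)
  moreover have "\<forall>k<N. kip (g k) (g k) = 1 \<or> kip (g k) (g k) = -1" using U(3) gW by blast
  moreover have "kip (g k) (g k') = 0" if "k < N" "k' < N" "k \<noteq> k'" for k k'
  proof -
    have "g k \<noteq> g k'" using g that unfolding bij_betw_def inj_on_def by auto
    then show ?thesis using U(4) gW that by blast
  qed
  moreover have "(\<Sum>k<N. kip (g k) (g k) * eta \<nu> * cnj (g k \<nu>) * g k \<mu>) = (if \<nu> = \<mu> then 1 else 0)"
    if "\<nu> < N" "\<mu> < N" for \<nu> \<mu>
    using sum.reindex_bij_betw[OF g, of "\<lambda>w. kip w w * eta \<nu> * cnj (w \<nu>) * w \<mu>"]
      partial_eigenbasis_resolution[OF P that] by simp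
  ultimately have "krein_eigenbasis g l" unfolding krein_eigenbasis_def by blast
  then show ?thesis by blast
qed

lemma krein_eigenbasis_decomposition:
  assumes B: "krein_eigenbasis w l" and "\<mu> < N" "\<nu> < N"
  shows "D $$ (\<mu>, \<nu>) = (\<Sum>k<N. kip (w k) (w k) * eta \<mu> * cnj (w k \<mu>) * of_real (l k) * w k \<nu>)"
proof -
  have ev: "\<forall>k<N. left_eigvec (w k) (l k)"
    and compl: "\<forall>\<nu><N. \<forall>\<mu><N. (\<Sum>k<N. kip (w k) (w k) * eta \<nu> * cnj (w k \<nu>) * w k \<mu>) = (if \<nu> = \<mu> then 1 else 0)"
    using B unfolding krein_eigenbasis_def by blast+
  have "D $$ (\<mu>, \<nu>) = (\<Sum>\<rho><N. (if \<mu> = \<rho> then 1 else 0) * D $$ (\<rho>, \<nu>))"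
    using \<open>\<mu> < N\<close> by (simp add: if_distrib[of "\<lambda>x. x * _"] cong: if_cong)
  also have "\<dots> = (\<Sum>\<rho><N. (\<Sum>k<N. kip (w k) (w k) * eta \<mu> * cnj (w k \<mu>) * w k \<rho>) * D $$ (\<rho>, \<nu>))"
    using compl \<open>\<mu> < N\<close> by (intro sum.cong refl) simp
  also have "\<dots> = (\<Sum>\<rho><N. \<Sum>k<N. (kip (w k) (w k) * eta \<mu> * cnj (w k \<mu>)) * (w k \<rho> * D $$ (\<rho>, \<nu>)))"
    by (simp add: sum_distrib_right mult.assoc)
  also have "\<dots> = (\<Sum>k<N. \<Sum>\<rho><N. (kip (w k) (w k) * eta \<mu> * cnj (w k \<mu>)) * (w k \<rho> * D $$ (\<rho>, \<nu>)))"
    by (rule sum.swap)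
  also have "\<dots> = (\<Sum>k<N. (kip (w k) (w k) * eta \<mu> * cnj (w k \<mu>)) * (\<Sum>\<rho><N. w k \<rho> * D $$ (\<rho>, \<nu>)))"
    by (simp add: sum_distrib_left)
  also have "\<dots> = (\<Sum>k<N. kip (w k) (w k) * eta \<mu> * cnj (w k \<mu>) * of_real (l k) * w k \<nu>)"
    using ev \<open>\<nu> < N\<close> unfolding left_eigvec_def by (intro sum.cong refl) (simp add: mult.assoc)
  finally show ?thesis .
qed

lemma krein_eigenbasis_inverse:
  assumes B: "krein_eigenbasis w l"
  defines "P \<equiv> mat N N (\<lambda>(\<mu>, k). kip (w k) (w k) * eta \<mu> * cnj (w k \<mu>))"
    and "Q \<equiv> mat N N (\<lambda>(k, \<mu>). w k \<mu>)"
  shows "P * Q = 1\<^sub>m N" "Q * P = 1\<^sub>m N"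
proof -
  have sg: "\<forall>k<N. kip (w k) (w k) = 1 \<or> kip (w k) (w k) = -1"
    and orth: "\<forall>k<N. \<forall>k'<N. k \<noteq> k' \<longrightarrow> kip (w k) (w k') = 0"
    and compl: "\<forall>\<nu><N. \<forall>\<mu><N. (\<Sum>k<N. kip (w k) (w k) * eta \<nu> * cnj (w k \<nu>) * w k \<mu>) = (if \<nu> = \<mu> then 1 else 0)"
    using B unfolding krein_eigenbasis_def by blast+
  show "P * Q = 1\<^sub>m N"
  proof (rule eq_matI)
    fix i j assume "i < dim_row (1\<^sub>m N :: complex mat)" "j < dim_col (1\<^sub>m N :: complex mat)"
    then have i: "i < N" and j: "j < N" by auto
    show "(P * Q) $$ (i, j) = 1\<^sub>m N $$ (i, j)"
      unfolding P_def Q_def index_mult_mat_mat[OF i j] using compl i j by simp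
  qed (auto simp: P_def Q_def)
  show "Q * P = 1\<^sub>m N"
  proof (rule eq_matI)
    fix i j assume "i < dim_row (1\<^sub>m N :: complex mat)" "j < dim_col (1\<^sub>m N :: complex mat)"
    then have i: "i < N" and j: "j < N" by auto
    have "(Q * P) $$ (i, j) = (\<Sum>\<mu><N. w i \<mu> * (kip (w j) (w j) * eta \<mu> * cnj (w j \<mu>)))"
      unfolding P_def Q_def index_mult_mat_mat[OF i j] by simp
    also have "\<dots> = kip (w j) (w j) * kip (w i) (w j)"
      unfolding kip_def[of "w i" "w j"] by (simp add: sum_distrib_left mult_ac)
    also have "\<dots> = (if i = j then 1 else 0)" using sg orth i j by auto
    finally show "(Q * P) $$ (i, j) = 1\<^sub>m N $$ (i, j)" using i j by simp
  qed (auto simp: P_def Q_def)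
qed

lemma physically_diagonalizable_if_krein_eigenbasis:
  assumes B: "krein_eigenbasis w l"
  shows "physically_diagonalizable D"
proof -
  define P where "P = mat N N (\<lambda>(\<mu>, k). kip (w k) (w k) * eta \<mu> * cnj (w k \<mu>))"
  define Q where "Q = mat N N (\<lambda>(k, \<mu>). w k \<mu>)"
  define L :: "complex mat" where "L = mat N N (\<lambda>(i, j). if i = j then of_real (l i) else 0)"
  have PL: "P * L = mat N N (\<lambda>(\<mu>, k). kip (w k) (w k) * eta \<mu> * cnj (w k \<mu>) * of_real (l k))"
  proof (rule eq_matI)
    fix i j assume "i < dim_row (mat N N (\<lambda>(\<mu>, k). kip (w k) (w k) * eta \<mu> * cnj (w k \<mu>) * complex_of_real (l k)))"
      "j < dim_col (mat N N (\<lambda>(\<mu>, k). kip (w k) (w k) * eta \<mu> * cnj (w k \<mu>) * complex_of_real (l k)))"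
    then have i: "i < N" and j: "j < N" by auto
    have "(P * L) $$ (i, j) = (\<Sum>r<N. kip (w r) (w r) * eta i * cnj (w r i) * (if r = j then of_real (l r) else 0))"
      unfolding P_def L_def index_mult_mat_mat[OF i j] by simp
    also have "\<dots> = (\<Sum>r<N. if r = j then kip (w j) (w j) * eta i * cnj (w j i) * of_real (l j) else 0)"
      by (intro sum.cong refl) auto
    finally show "(P * L) $$ (i, j) = mat N N (\<lambda>(\<mu>, k). kip (w k) (w k) * eta \<mu> * cnj (w k \<mu>) * of_real (l k)) $$ (i, j)"
      using i j by simp
  qed (auto simp: P_def L_def)
  have "D = P * L * Q"
  proof (rule eq_matI)
    fix i j assume "i < dim_row (P * L * Q)" "j < dim_col (P * L * Q)"
    then have i: "i < N" and j: "j < N" by (auto simp: P_def Q_def)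
    have "(P * L * Q) $$ (i, j) = (\<Sum>k<N. kip (w k) (w k) * eta i * cnj (w k i) * of_real (l k) * w k j)"
      unfolding PL Q_def index_mult_mat_mat[OF i j] by simp
    then show "D $$ (i, j) = (P * L * Q) $$ (i, j)" using krein_eigenbasis_decomposition[OF B i j] by simp
  qed (use D_carrier in \<open>auto simp: P_def Q_def\<close>)
  moreover have "{D, L, P, Q} \<subseteq> carrier_mat N N" using D_carrier by (auto simp: P_def Q_def L_def)
  ultimately have "similar_mat_wit D L P Q"
    using krein_eigenbasis_inverse[OF B] D_carrier unfolding similar_mat_wit_def P_def Q_def Let_def by auto
  moreover have "diagonal_mat L" "\<forall>i<N. L $$ (i, i) \<in> \<real>" unfolding diagonal_mat_def L_def by auto
  ultimately show ?thesis unfolding physically_diagonalizable_def using D_carrier by blast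
qed

lemma eigvecs_span_if_physically_diagonalizable:
  assumes "physically_diagonalizable D"
  shows "\<exists>S. finite S \<and> (\<forall>x\<in>S. \<exists>l. left_eigvec x l) \<and> (\<forall>v. in_span S v)"
proof -
  from assms obtain m L P Q where Dm: "D \<in> carrier_mat m m" and sim: "similar_mat_wit D L P Q"
    and diag: "diagonal_mat L" and re: "\<forall>i<m. L $$ (i, i) \<in> \<real>"
    unfolding physically_diagonalizable_def by blast
  have m: "m = N" using Dm D_carrier by auto
  have car: "L \<in> carrier_mat N N" "P \<in> carrier_mat N N" "Q \<in> carrier_mat N N"
    and PQ: "P * Q = 1\<^sub>m N" and QP: "Q * P = 1\<^sub>m N" and DPLQ: "D = P * L * Q"
    using sim D_carrier unfolding similar_mat_wit_def Let_def by auto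
  have QD: "Q * D = L * Q"
  proof -
    have "Q * (P * L * Q) = Q * (P * L) * Q"
      using assoc_mult_mat[of Q N N "P * L" N Q N] car by auto
    also have "Q * (P * L) = Q * P * L"
      using assoc_mult_mat[of Q N N P N L N] car by auto
    finally show ?thesis unfolding DPLQ QP using car by simp
  qed
  have row_eig: "left_eigvec (\<lambda>\<mu>. Q $$ (k, \<mu>)) (Re (L $$ (k, k)))" if k: "k < N" for k
    unfolding left_eigvec_def
  proof (intro allI impI)
    fix \<nu> assume \<nu>: "\<nu> < N"
    have "(\<Sum>\<mu><N. Q $$ (k, \<mu>) * D $$ (\<mu>, \<nu>)) = (L * Q) $$ (k, \<nu>)"
      using index_mult_mat_sum[OF car(3) D_carrier k \<nu>] unfolding QD by simp
    also have "\<dots> = (\<Sum>r<N. L $$ (k, r) * Q $$ (r, \<nu>))" using index_mult_mat_sum[OF car(1) car(3) k \<nu>] .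
    also have "\<dots> = (\<Sum>r<N. if r = k then L $$ (k, k) * Q $$ (k, \<nu>) else 0)"
      using diag car k unfolding diagonal_mat_def by (intro sum.cong refl) auto
    also have "\<dots> = L $$ (k, k) * Q $$ (k, \<nu>)" using k by simp
    also have "L $$ (k, k) = of_real (Re (L $$ (k, k)))" using re k m by (simp add: complex_is_Real_iff)
    finally show "(\<Sum>\<mu><N. Q $$ (k, \<mu>) * D $$ (\<mu>, \<nu>)) = of_real (Re (L $$ (k, k))) * Q $$ (k, \<nu>)" .
  qed
  have "in_span ((\<lambda>k \<mu>. Q $$ (k, \<mu>)) ` {..<N}) v" for v
  proof (rule in_span_of_resolution[where g = "\<lambda>k p. P $$ (p, k)"])
    fix p q assume p: "p < N" and q: "q < N"
    show "(\<Sum>k<N. P $$ (p, k) * Q $$ (k, q)) = (if p = q then 1 else 0)"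
      using index_mult_mat_sum[OF car(2,3) p q] p q unfolding PQ by simp
  qed
  moreover have "\<forall>x\<in>(\<lambda>k \<mu>. Q $$ (k, \<mu>)) ` {..<N}. \<exists>l. left_eigvec x l" using row_eig by blast
  moreover have "finite ((\<lambda>k \<mu>. Q $$ (k, \<mu>)) ` {..<N})" by simp
  ultimately show ?thesis by blast
qed

lemma physically_diagonalizable_iff_krein_eigenbasis:
  "physically_diagonalizable D \<longleftrightarrow> (\<exists>w l. krein_eigenbasis w l)"
proof
  assume "physically_diagonalizable D"
  then show "\<exists>w l. krein_eigenbasis w l"
    using eigvecs_span_if_physically_diagonalizable krein_eigenbasis_exists by blast
qed (use physically_diagonalizable_if_krein_eigenbasis in blast)

end

section \<open>Inverting a Bogoliubov transformation\<close>

definition bogoliubov_entry ::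
  "nat \<Rightarrow> (nat \<Rightarrow> nat \<Rightarrow> complex) \<Rightarrow> (nat \<Rightarrow> nat \<Rightarrow> complex) \<Rightarrow> nat \<Rightarrow> nat \<Rightarrow> complex" where
  "bogoliubov_entry N X Y k p =
     (if k < N then (if p < N then X k p else Y k (p - N))
      else (if p < N then cnj (Y (k - N) p) else cnj (X (k - N) (p - N))))"

definition bogoliubov_mat :: "nat \<Rightarrow> (nat \<Rightarrow> nat \<Rightarrow> complex) \<Rightarrow> (nat \<Rightarrow> nat \<Rightarrow> complex) \<Rightarrow> complex mat" where
  "bogoliubov_mat N X Y = mat (2*N) (2*N) (\<lambda>(k, p). bogoliubov_entry N X Y k p)"

(* K T^H J with K = diag(eta, -eta) and J = diag(1, -1), where T = ((X, Y), (conj Y, conj X)) is the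
   Bogoliubov matrix. *)
definition bogoliubov_inverse_mat ::
  "nat \<Rightarrow> (nat \<Rightarrow> complex) \<Rightarrow> (nat \<Rightarrow> nat \<Rightarrow> complex) \<Rightarrow> (nat \<Rightarrow> nat \<Rightarrow> complex) \<Rightarrow> complex mat" where
  "bogoliubov_inverse_mat N eta X Y = mat (2*N) (2*N) (\<lambda>(p, l).
     (if p < N then eta p else - eta (p - N)) * cnj (bogoliubov_entry N X Y l p) * (if l < N then 1 else -1))"

lemma bogoliubov_product_blocks:
  fixes N :: nat and eta :: "nat \<Rightarrow> complex" and X Y :: "nat \<Rightarrow> nat \<Rightarrow> complex"
  assumes eta: "\<forall>\<mu><N. cnj (eta \<mu>) = eta \<mu>" and k: "k < N" and l: "l < N"
  defines "P \<equiv> \<lambda>k l. \<Sum>p<2*N. bogoliubov_entry N X Y k p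
    * ((if p < N then eta p else - eta (p - N)) * cnj (bogoliubov_entry N X Y l p) * (if l < N then 1 else -1))"
  shows "P k l = (\<Sum>\<mu><N. eta \<mu> * (X k \<mu> * cnj (X l \<mu>) - Y k \<mu> * cnj (Y l \<mu>)))"
    and "P k (N + l) = - (\<Sum>\<mu><N. eta \<mu> * (X k \<mu> * Y l \<mu> - Y k \<mu> * X l \<mu>))"
    and "P (N + k) l = cnj (\<Sum>\<mu><N. eta \<mu> * (X l \<mu> * Y k \<mu> - Y l \<mu> * X k \<mu>))"
    and "P (N + k) (N + l) = cnj (\<Sum>\<mu><N. eta \<mu> * (X k \<mu> * cnj (X l \<mu>) - Y k \<mu> * cnj (Y l \<mu>)))"
  using k l eta unfolding P_def sum_lessThan_double
  by (simp_all add: bogoliubov_entry_def sum_subtractf sum_negf algebra_simps)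

lemma bogoliubov_mat_inverse:
  fixes N :: nat and eta :: "nat \<Rightarrow> complex" and X Y :: "nat \<Rightarrow> nat \<Rightarrow> complex"
  assumes eta: "\<forall>\<mu><N. cnj (eta \<mu>) = eta \<mu>"
    and orthonormal: "\<forall>k<N. \<forall>l<N. (\<Sum>\<mu><N. eta \<mu> * (X k \<mu> * cnj (X l \<mu>) - Y k \<mu> * cnj (Y l \<mu>))) = (if k = l then 1 else 0)"
    and symplectic: "\<forall>k<N. \<forall>l<N. (\<Sum>\<mu><N. eta \<mu> * (X k \<mu> * Y l \<mu> - Y k \<mu> * X l \<mu>)) = 0"
  shows "bogoliubov_mat N X Y * bogoliubov_inverse_mat N eta X Y = 1\<^sub>m (2*N)"
proof (rule eq_matI)
  fix k l assume "k < dim_row (1\<^sub>m (2*N) :: complex mat)" "l < dim_col (1\<^sub>m (2*N) :: complex mat)"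
  then have k: "k < 2*N" and l: "l < 2*N" by auto
  note blocks = bogoliubov_product_blocks[OF eta]
  have "(bogoliubov_mat N X Y * bogoliubov_inverse_mat N eta X Y) $$ (k, l) = (\<Sum>p<2*N. bogoliubov_entry N X Y k p
      * ((if p < N then eta p else - eta (p - N)) * cnj (bogoliubov_entry N X Y l p) * (if l < N then 1 else -1)))"
    unfolding bogoliubov_mat_def bogoliubov_inverse_mat_def index_mult_mat_mat[OF k l] by simp
  also have "\<dots> = (if k = l then 1 else 0)"
  proof -
    have "k < N \<or> (\<exists>k'<N. k = N + k')" "l < N \<or> (\<exists>l'<N. l = N + l')" using k l by presburger+
    then consider (aa) "k < N" "l < N" | (ab) l' where "k < N" "l' < N" "l = N + l'"
      | (ba) k' where "k' < N" "l < N" "k = N + k'" | (bb) k' l' where "k' < N" "l' < N" "k = N + k'" "l = N + l'"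
      by blast
    then show ?thesis
    proof cases
      case aa
      then show ?thesis using blocks(1)[OF aa] orthonormal by simp
    next
      case (ab l')
      then show ?thesis using blocks(2)[OF ab(1,2)] symplectic by simp
    next
      case (ba k')
      have "cnj (\<Sum>\<mu><N. eta \<mu> * (X l \<mu> * Y k' \<mu> - Y l \<mu> * X k' \<mu>)) = 0" using symplectic ba by simp
      then show ?thesis using ba blocks(3)[OF ba(1,2)] by simp
    next
      case (bb k' l')
      have "cnj (\<Sum>\<mu><N. eta \<mu> * (X k' \<mu> * cnj (X l' \<mu>) - Y k' \<mu> * cnj (Y l' \<mu>))) = (if k' = l' then 1 else 0)"
        using orthonormal bb by simp
      then show ?thesis using bb blocks(4)[OF bb(1,2)] by simp
    qed
  qed
  finally show "(bogoliubov_mat N X Y * bogoliubov_inverse_mat N eta X Y) $$ (k, l) = 1\<^sub>m (2*N) $$ (k, l)"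
    using k l by simp
qed (auto simp: bogoliubov_mat_def bogoliubov_inverse_mat_def)

lemma bogoliubov_completeness:
  fixes N :: nat and eta :: "nat \<Rightarrow> complex" and X Y :: "nat \<Rightarrow> nat \<Rightarrow> complex"
  assumes eta: "\<forall>\<mu><N. cnj (eta \<mu>) = eta \<mu>"
    and orthonormal: "\<forall>k<N. \<forall>l<N. (\<Sum>\<mu><N. eta \<mu> * (X k \<mu> * cnj (X l \<mu>) - Y k \<mu> * cnj (Y l \<mu>))) = (if k = l then 1 else 0)"
    and symplectic: "\<forall>k<N. \<forall>l<N. (\<Sum>\<mu><N. eta \<mu> * (X k \<mu> * Y l \<mu> - Y k \<mu> * X l \<mu>)) = 0"
    and p: "p < N" and q: "q < N"
  shows "(\<Sum>k<N. eta p * cnj (X k p) * X k q - eta p * Y k p * cnj (Y k q)) = (if p = q then 1 else 0)"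
proof -
  have p2: "p < 2*N" and q2: "q < 2*N" using p q by auto
  have BT: "bogoliubov_inverse_mat N eta X Y * bogoliubov_mat N X Y = 1\<^sub>m (2*N)"
    by (rule mat_mult_left_right_inverse[OF _ _ bogoliubov_mat_inverse[OF eta orthonormal symplectic]])
      (auto simp: bogoliubov_mat_def bogoliubov_inverse_mat_def)
  have "(\<Sum>k<N. eta p * cnj (X k p) * X k q - eta p * Y k p * cnj (Y k q))
      = (\<Sum>k<2*N. (if p < N then eta p else - eta (p - N)) * cnj (bogoliubov_entry N X Y k p)
          * (if k < N then 1 else -1) * bogoliubov_entry N X Y k q)"
    unfolding sum_lessThan_double using p q by (simp add: bogoliubov_entry_def sum_subtractf sum_negf algebra_simps)
  also have "\<dots> = (bogoliubov_inverse_mat N eta X Y * bogoliubov_mat N X Y) $$ (p, q)"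
    unfolding bogoliubov_mat_def bogoliubov_inverse_mat_def index_mult_mat_mat[OF p2 q2] by simp
  also have "\<dots> = (if p = q then 1 else 0)" unfolding BT using p2 q2 by simp
  finally show ?thesis .
qed

section \<open>Complex star algebras and commutators\<close>

lemma comm_add_left: "comm (x + y) z = comm x z + comm y z"
  by (simp add: comm_def algebra_simps)

lemma comm_add_right: "comm z (x + y) = comm z x + comm z y"
  by (simp add: comm_def algebra_simps)

lemma comm_sum_left: "comm (\<Sum>i\<in>S. f i) z = (\<Sum>i\<in>S. comm (f i) z)"
  by (simp add: comm_def sum_distrib_left sum_distrib_right sum_subtractf)

lemma comm_sum_right: "comm z (\<Sum>i\<in>S. f i) = (\<Sum>i\<in>S. comm z (f i))"
  by (simp add: comm_def sum_distrib_left sum_distrib_right sum_subtractf)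

lemma comm_mult_right: "comm x (y * z) = comm x y * z + y * comm x z"
  by (simp add: comm_def algebra_simps)

lemma comm_swap: "comm y x = - comm x y"
  by (simp add: comm_def)

locale star_algebra =
  fixes emb :: "complex \<Rightarrow> 'A::ring_1" and st :: "'A \<Rightarrow> 'A"
  assumes complex_star_algebra: "complex_star_algebra emb st"
    and nontrivial: "(1::'A) \<noteq> 0"
begin

lemma emb_one [simp]: "emb 1 = 1"
  and emb_add [simp]: "emb (c + d) = emb c + emb d"
  and emb_mult: "emb (c * d) = emb c * emb d"
  and emb_commute: "emb c * x = x * emb c"
  and star_add [simp]: "st (x + y) = st x + st y"
  and star_mult [simp]: "st (x * y) = st y * st x"
  and star_star [simp]: "st (st x) = x"
  and star_emb [simp]: "st (emb c) = emb (cnj c)"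
  using complex_star_algebra unfolding complex_star_algebra_def by blast+

lemma emb_zero [simp]: "emb 0 = 0"
  using emb_add[of 0 0] by simp

lemma emb_uminus [simp]: "emb (- c) = - emb c"
  using emb_add[of c "- c"] by (simp add: eq_neg_iff_add_eq_0 add.commute)

lemma emb_diff [simp]: "emb (c - d) = emb c - emb d"
  using emb_add[of c "- d"] by simp

lemma emb_sum: "emb (\<Sum>i\<in>S. f i) = (\<Sum>i\<in>S. emb (f i))"
  by (induction S rule: infinite_finite_induct) auto

lemma emb_eq_0_iff: "emb c = 0 \<longleftrightarrow> c = 0"
proof
  assume "emb c = 0"
  show "c = 0"
  proof (rule ccontr)
    assume "c \<noteq> 0"
    then have "emb (inverse c) * emb c = 1" by (simp flip: emb_mult)
    with \<open>emb c = 0\<close> nontrivial show False by simp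
  qed
qed simp

lemma emb_eq_iff: "emb c = emb d \<longleftrightarrow> c = d"
  using emb_eq_0_iff[of "c - d"] by auto

lemma emb_mult_emb: "emb c * (emb d * x) = emb (c * d) * x"
  by (simp add: emb_mult mult.assoc)

lemma star_zero [simp]: "st 0 = 0"
  using star_add[of 0 0] by simp

lemma star_uminus [simp]: "st (- x) = - st x"
  using star_add[of x "- x"] by (simp add: eq_neg_iff_add_eq_0 add.commute)

lemma star_diff [simp]: "st (x - y) = st x - st y"
  using star_add[of x "- y"] by simp

lemma star_sum: "st (\<Sum>i\<in>S. f i) = (\<Sum>i\<in>S. st (f i))"
  by (induction S rule: infinite_finite_induct) auto

lemma star_emb_mult [simp]: "st (emb c * x) = emb (cnj c) * st x"
  by (simp only: star_mult star_emb emb_commute[of "cnj c"])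

lemma kdelta_eq_emb: "(kdelta i j :: 'A) = emb (if i = j then 1 else 0)"
  by (simp add: kdelta_def)

lemma comm_emb_left: "comm (emb c * x) y = emb c * comm x y"
proof -
  have "y * (emb c * x) = emb c * (y * x)" by (metis emb_commute mult.assoc)
  then show ?thesis by (simp add: comm_def algebra_simps)
qed

lemma comm_emb_right: "comm x (emb c * y) = emb c * comm x y"
proof -
  have "x * (emb c * y) = emb c * (x * y)" by (metis emb_commute mult.assoc)
  then show ?thesis by (simp add: comm_def algebra_simps)
qed

lemma comm_emb [simp]: "comm x (emb c) = 0"
  using emb_commute[of c x] by (simp add: comm_def)

lemma comm_star: "comm (st x) (st y) = st (comm y x)"
  by (simp add: comm_def)

lemma sum_emb_mult_delta:
  fixes K :: nat
  assumes "\<nu> < K"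
  shows "(\<Sum>\<mu><K. emb (x \<mu>) * emb (if \<mu> = \<nu> then c else 0)) = emb (x \<nu> * c)"
proof -
  have "(\<Sum>\<mu><K. emb (x \<mu>) * emb (if \<mu> = \<nu> then c else 0)) = (\<Sum>\<mu><K. if \<mu> = \<nu> then emb (x \<nu> * c) else 0)"
    by (rule sum.cong) (auto simp: emb_mult)
  also have "\<dots> = emb (x \<nu> * c)" using assms by simp
  finally show ?thesis .
qed

lemma comm_diagonal_form:
  fixes K :: nat
  assumes rel: "\<forall>k<K. \<forall>l<K. comm (e k) (st (e l)) = kdelta k l \<and> comm (e k) (e l) = 0"
    and k: "k < K"
  shows "comm (e k) ((\<Sum>l<K. emb (lam l) * st (e l) * e l) + emb C) = emb (lam k) * e k"
proof -
  have "comm (e k) ((\<Sum>l<K. emb (lam l) * st (e l) * e l) + emb C)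
      = (\<Sum>l<K. emb (lam l) * (comm (e k) (st (e l)) * e l + st (e l) * comm (e k) (e l)))"
    unfolding comm_add_right comm_emb comm_sum_right by (simp add: mult.assoc comm_emb_right comm_mult_right)
  also have "\<dots> = (\<Sum>l<K. if l = k then emb (lam k) * e k else 0)"
    using rel k unfolding kdelta_eq_emb by (intro sum.cong refl) auto
  also have "\<dots> = emb (lam k) * e k" using k by simp
  finally show ?thesis .
qed

end

section \<open>Bosonic modes\<close>

definition mode_sign :: "nat \<Rightarrow> nat \<Rightarrow> complex" where
  "mode_sign n \<mu> = (if \<mu> < n then 1 else -1)"

lemma mode_sign_square [simp]: "mode_sign n \<mu> * mode_sign n \<mu> = 1"
  by (simp add: mode_sign_def)

lemma cnj_mode_sign [simp]: "cnj (mode_sign n \<mu>) = mode_sign n \<mu>"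
  by (simp add: mode_sign_def)

lemma mode_sign_nonzero [simp]: "mode_sign n \<mu> \<noteq> 0"
  by (simp add: mode_sign_def)

(* H = psi^+ M psi - tr eps with M = ((alpha, gamma), (conj gamma, eps^T)). *)
definition hamiltonian_matrix ::
  "nat \<Rightarrow> (nat \<Rightarrow> nat \<Rightarrow> complex) \<Rightarrow> (nat \<Rightarrow> nat \<Rightarrow> complex) \<Rightarrow> (nat \<Rightarrow> nat \<Rightarrow> complex) \<Rightarrow> nat \<Rightarrow> nat \<Rightarrow> complex" where
  "hamiltonian_matrix n \<alpha> \<epsilon> \<gamma> \<mu> \<nu> =
     (if \<mu> < n then (if \<nu> < n then \<alpha> \<mu> \<nu> else \<gamma> \<mu> (\<nu> - n))
      else (if \<nu> < n then cnj (\<gamma> (\<mu> - n) \<nu>) else \<epsilon> (\<nu> - n) (\<mu> - n)))"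

lemma hamiltonian_matrix_hermitian:
  assumes herm_alpha: "\<forall>i<n. \<forall>j<n. \<alpha> i j = cnj (\<alpha> j i)"
    and herm_eps: "\<forall>i<n. \<forall>j<n. \<epsilon> i j = cnj (\<epsilon> j i)"
    and sym_gamma: "\<forall>i<n. \<forall>j<n. \<gamma> i j = \<gamma> j i"
    and "\<mu> < 2*n" "\<nu> < 2*n"
  shows "hamiltonian_matrix n \<alpha> \<epsilon> \<gamma> \<mu> \<nu> = cnj (hamiltonian_matrix n \<alpha> \<epsilon> \<gamma> \<nu> \<mu>)"
proof (cases "\<mu> < n")
  case True
  show ?thesis
  proof (cases "\<nu> < n")
    case True with \<open>\<mu> < n\<close> show ?thesis
      using herm_alpha[rule_format, of \<mu> \<nu>] by (simp add: hamiltonian_matrix_def)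
  next
    case False
    then have "\<nu> - n < n" using \<open>\<nu> < 2*n\<close> by simp
    with \<open>\<mu> < n\<close> False show ?thesis
      using sym_gamma[rule_format, of "\<nu> - n" \<mu>] by (simp add: hamiltonian_matrix_def)
  qed
next
  case False
  then have \<mu>: "\<mu> - n < n" using \<open>\<mu> < 2*n\<close> by simp
  show ?thesis
  proof (cases "\<nu> < n")
    case True with False \<mu> show ?thesis
      using sym_gamma[rule_format, of "\<mu> - n" \<nu>] by (simp add: hamiltonian_matrix_def)
  next
    case \<nu>: False
    then have "\<nu> - n < n" using \<open>\<nu> < 2*n\<close> by simp
    with False \<nu> \<mu> show ?thesis
      using herm_eps[rule_format, of "\<nu> - n" "\<mu> - n"] by (simp add: hamiltonian_matrix_def)
  qed
qed

locale bosonic_modes = star_algebra emb st for emb :: "complex \<Rightarrow> 'A::ring_1" and st +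
  fixes n :: nat and a b :: "nat \<Rightarrow> 'A"
  assumes bosonic: "bosonic_families emb st n a b"
begin

abbreviation "\<psi> \<equiv> psi st n a b"

lemma bosonic_commutators:
  assumes "i < n" "j < n"
  shows "comm (a i) (st (a j)) = emb (if i = j then 1 else 0)"
    "comm (b i) (st (b j)) = emb (if i = j then 1 else 0)"
    "comm (a i) (a j) = 0" "comm (b i) (b j) = 0"
    "comm (a i) (b j) = 0" "comm (a i) (st (b j)) = 0"
  using bosonic assms unfolding bosonic_families_def kdelta_eq_emb by auto

lemma psi_less [simp]: "\<mu> < n \<Longrightarrow> \<psi> \<mu> = a \<mu>"
  by (simp add: psi_def)

lemma psi_add_left [simp]: "\<psi> (n + i) = st (b i)"
  by (simp add: psi_def)

lemma psi_add_right [simp]: "\<psi> (i + n) = st (b i)"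
  by (simp add: psi_def)

lemma psi_cases:
  assumes "\<mu> < 2*n"
  obtains (lo) "\<mu> < n" | (hi) i where "i < n" "\<mu> = n + i"
proof (cases "\<mu> < n")
  case True then show ?thesis using lo by blast
next
  case False then show ?thesis using hi[of "\<mu> - n"] assms by auto
qed

lemma comm_psi_psi:
  assumes "\<mu> < 2*n" "\<nu> < 2*n"
  shows "comm (\<psi> \<mu>) (\<psi> \<nu>) = 0"
proof (cases rule: psi_cases[OF assms(1), case_names lo hi])
  case lo
  then show ?thesis
  proof (cases rule: psi_cases[OF assms(2), case_names lo hi])
    case lo2: lo with lo show ?thesis using bosonic_commutators by simp
  next
    case (hi j) with lo show ?thesis using bosonic_commutators by simp
  qed
next
  case (hi i)
  then show ?thesis
  proof (cases rule: psi_cases[OF assms(2), case_names lo hi])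
    case lo2: lo
    with hi show ?thesis using bosonic_commutators(6)[of \<nu> i] by (simp add: comm_swap[of "st (b i)"])
  next
    case (hi j)
    with \<open>i < n\<close> \<open>\<mu> = n + i\<close> show ?thesis using bosonic_commutators(4)[of j i] by (simp add: comm_star)
  qed
qed

lemma comm_psi_star_psi:
  assumes "\<mu> < 2*n" "\<nu> < 2*n"
  shows "comm (\<psi> \<mu>) (st (\<psi> \<nu>)) = emb (if \<mu> = \<nu> then mode_sign n \<mu> else 0)"
proof (cases rule: psi_cases[OF assms(1), case_names lo hi])
  case lo
  then show ?thesis
  proof (cases rule: psi_cases[OF assms(2), case_names lo hi])
    case lo2: lo with lo show ?thesis using bosonic_commutators by (simp add: mode_sign_def)
  next
    case (hi j) with lo show ?thesis using bosonic_commutators by simp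
  qed
next
  case (hi i)
  then show ?thesis
  proof (cases rule: psi_cases[OF assms(2), case_names lo hi])
    case lo2: lo with hi show ?thesis using bosonic_commutators(5)[of \<nu> i] by (simp add: comm_star)
  next
    case (hi j)
    with \<open>i < n\<close> \<open>\<mu> = n + i\<close> show ?thesis using bosonic_commutators(2)[of j i]
      by (auto simp add: comm_swap[of "st (b i)"] mode_sign_def)
  qed
qed

lemma comm_star_psi_star_psi:
  assumes "\<mu> < 2*n" "\<nu> < 2*n"
  shows "comm (st (\<psi> \<mu>)) (st (\<psi> \<nu>)) = 0"
  using comm_psi_psi[OF assms(2,1)] by (simp add: comm_star)

lemma comm_star_psi_psi:
  assumes "\<mu> < 2*n" "\<nu> < 2*n"
  shows "comm (st (\<psi> \<mu>)) (\<psi> \<nu>) = emb (if \<mu> = \<nu> then - mode_sign n \<mu> else 0)"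
  using comm_psi_star_psi[OF assms(2,1)] by (auto simp add: comm_swap[of "st (\<psi> \<mu>)"])

definition mode_op :: "(nat \<Rightarrow> complex) \<Rightarrow> (nat \<Rightarrow> complex) \<Rightarrow> 'A" where
  "mode_op x y = (\<Sum>\<mu><2*n. emb (x \<mu>) * \<psi> \<mu> + emb (y \<mu>) * st (\<psi> \<mu>))"

lemma mode_op_expand:
  "mode_op x y = (\<Sum>i<n. emb (x i) * a i + emb (y i) * st (a i) + emb (y (n + i)) * b i + emb (x (n + i)) * st (b i))"
  unfolding mode_op_def sum_lessThan_double by (simp add: sum.distrib algebra_simps)

lemma in_mode_span_iff: "in_mode_span emb st n a b e \<longleftrightarrow> (\<exists>x y. e = mode_op x y)"
proof
  assume "in_mode_span emb st n a b e"
  then obtain c1 c2 c3 c4 where e: "e = (\<Sum>i<n. emb (c1 i) * a i + emb (c2 i) * st (a i)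
      + emb (c3 i) * b i + emb (c4 i) * st (b i))"
    unfolding in_mode_span_def by blast
  define x where "x \<mu> = (if \<mu> < n then c1 \<mu> else c4 (\<mu> - n))" for \<mu>
  define y where "y \<mu> = (if \<mu> < n then c2 \<mu> else c3 (\<mu> - n))" for \<mu>
  have "e = mode_op x y" unfolding e mode_op_expand by (intro sum.cong refl) (simp add: x_def y_def)
  then show "\<exists>x y. e = mode_op x y" by blast
next
  assume "\<exists>x y. e = mode_op x y"
  then obtain x y where e: "e = mode_op x y" by blast
  show "in_mode_span emb st n a b e"
    unfolding e in_mode_span_def mode_op_expand
    by (rule exI[of _ x], rule exI[of _ y], rule exI[of _ "\<lambda>i. y (n + i)"], rule exI[of _ "\<lambda>i. x (n + i)"]) simp
qed

lemma emb_mult_mode_op: "emb c * mode_op x y = mode_op (\<lambda>\<nu>. c * x \<nu>) (\<lambda>\<nu>. c * y \<nu>)"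
  unfolding mode_op_def by (simp add: sum_distrib_left distrib_left emb_mult_emb)

lemma comm_mode_op_psi:
  assumes "\<nu> < 2*n"
  shows "comm (mode_op x y) (\<psi> \<nu>) = emb (- y \<nu> * mode_sign n \<nu>)"
proof -
  have "comm (mode_op x y) (\<psi> \<nu>)
      = (\<Sum>\<mu><2*n. emb (x \<mu>) * comm (\<psi> \<mu>) (\<psi> \<nu>) + emb (y \<mu>) * comm (st (\<psi> \<mu>)) (\<psi> \<nu>))"
    unfolding mode_op_def comm_sum_left comm_add_left comm_emb_left ..
  also have "\<dots> = (\<Sum>\<mu><2*n. emb (y \<mu>) * emb (if \<mu> = \<nu> then - mode_sign n \<nu> else 0))"
    by (rule sum.cong) (auto simp: comm_psi_psi comm_star_psi_psi assms)
  also have "\<dots> = emb (- y \<nu> * mode_sign n \<nu>)" using sum_emb_mult_delta[OF assms] by simp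
  finally show ?thesis .
qed

lemma comm_mode_op_star_psi:
  assumes "\<nu> < 2*n"
  shows "comm (mode_op x y) (st (\<psi> \<nu>)) = emb (x \<nu> * mode_sign n \<nu>)"
proof -
  have "comm (mode_op x y) (st (\<psi> \<nu>))
      = (\<Sum>\<mu><2*n. emb (x \<mu>) * comm (\<psi> \<mu>) (st (\<psi> \<nu>)) + emb (y \<mu>) * comm (st (\<psi> \<mu>)) (st (\<psi> \<nu>)))"
    unfolding mode_op_def comm_sum_left comm_add_left comm_emb_left ..
  also have "\<dots> = (\<Sum>\<mu><2*n. emb (x \<mu>) * emb (if \<mu> = \<nu> then mode_sign n \<nu> else 0))"
    by (rule sum.cong) (auto simp: comm_psi_star_psi comm_star_psi_star_psi assms)
  also have "\<dots> = emb (x \<nu> * mode_sign n \<nu>)" using sum_emb_mult_delta[OF assms] by simp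
  finally show ?thesis .
qed

lemma mode_op_coeffs_eq:
  assumes "mode_op x y = mode_op x' y'" "\<nu> < 2*n"
  shows "x \<nu> = x' \<nu>" "y \<nu> = y' \<nu>"
proof -
  have "emb (x \<nu> * mode_sign n \<nu>) = emb (x' \<nu> * mode_sign n \<nu>)"
    by (metis assms comm_mode_op_star_psi)
  then show "x \<nu> = x' \<nu>" by (simp add: emb_eq_iff)
  have "emb (- y \<nu> * mode_sign n \<nu>) = emb (- y' \<nu> * mode_sign n \<nu>)"
    by (metis assms comm_mode_op_psi)
  then show "y \<nu> = y' \<nu>" by (simp add: emb_eq_iff)
qed

lemma comm_mode_op_mode_op:
  "comm (mode_op x y) (mode_op x' y') = emb (\<Sum>\<nu><2*n. mode_sign n \<nu> * (x \<nu> * y' \<nu> - y \<nu> * x' \<nu>))"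
proof -
  have "comm (mode_op x y) (mode_op x' y')
      = (\<Sum>\<nu><2*n. emb (x' \<nu>) * comm (mode_op x y) (\<psi> \<nu>) + emb (y' \<nu>) * comm (mode_op x y) (st (\<psi> \<nu>)))"
    unfolding mode_op_def[of x' y'] comm_sum_right comm_add_right comm_emb_right ..
  also have "\<dots> = (\<Sum>\<nu><2*n. emb (mode_sign n \<nu> * (x \<nu> * y' \<nu> - y \<nu> * x' \<nu>)))"
    by (rule sum.cong)
      (auto simp: comm_mode_op_psi comm_mode_op_star_psi emb_mult[symmetric] algebra_simps)
  finally show ?thesis by (simp add: emb_sum)
qed

lemma star_mode_op: "st (mode_op x y) = mode_op (\<lambda>\<mu>. cnj (y \<mu>)) (\<lambda>\<mu>. cnj (x \<mu>))"
  unfolding mode_op_def star_sum star_add star_emb_mult star_star by (simp add: add.commute)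

lemma comm_mode_op_star_mode_op:
  "comm (mode_op x y) (st (mode_op x' y'))
    = emb (\<Sum>\<nu><2*n. mode_sign n \<nu> * (x \<nu> * cnj (x' \<nu>) - y \<nu> * cnj (y' \<nu>)))"
  unfolding star_mode_op comm_mode_op_mode_op by simp

lemma emb_mult_emb_mult: "emb p * u * (emb q * v) = emb (p * q) * u * v"
proof -
  have "u * (emb q * v) = emb q * (u * v)" by (metis emb_commute mult.assoc)
  then show ?thesis by (simp add: emb_mult mult.assoc)
qed

lemma star_mode_op_mult_mode_op:
  "st (mode_op x (\<lambda>_. 0)) * mode_op x (\<lambda>_. 0)
    = (\<Sum>\<mu><2*n. \<Sum>\<nu><2*n. emb (cnj (x \<mu>) * x \<nu>) * st (\<psi> \<mu>) * \<psi> \<nu>)"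
proof -
  have "st (mode_op x (\<lambda>_. 0)) * mode_op x (\<lambda>_. 0)
      = (\<Sum>\<mu><2*n. emb (cnj (x \<mu>)) * st (\<psi> \<mu>)) * (\<Sum>\<nu><2*n. emb (x \<nu>) * \<psi> \<nu>)"
    unfolding star_mode_op by (simp add: mode_op_def)
  also have "\<dots> = (\<Sum>\<mu><2*n. \<Sum>\<nu><2*n. emb (cnj (x \<mu>)) * st (\<psi> \<mu>) * (emb (x \<nu>) * \<psi> \<nu>))"
    by (simp add: sum_product)
  also have "\<dots> = (\<Sum>\<mu><2*n. \<Sum>\<nu><2*n. emb (cnj (x \<mu>) * x \<nu>) * st (\<psi> \<mu>) * \<psi> \<nu>)"
    by (simp add: emb_mult_emb_mult)
  finally show ?thesis .
qed

lemma sum_number_ops: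
  fixes f :: "nat \<Rightarrow> complex" and w :: "nat \<Rightarrow> nat \<Rightarrow> complex"
  shows "(\<Sum>k<K. emb (f k) * (st (mode_op (w k) (\<lambda>_. 0)) * mode_op (w k) (\<lambda>_. 0)))
    = (\<Sum>\<mu><2*n. \<Sum>\<nu><2*n. emb (\<Sum>k<K. f k * (cnj (w k \<mu>) * w k \<nu>)) * st (\<psi> \<mu>) * \<psi> \<nu>)"
proof -
  have "(\<Sum>k<K. emb (f k) * (st (mode_op (w k) (\<lambda>_. 0)) * mode_op (w k) (\<lambda>_. 0)))
     = (\<Sum>k<K. \<Sum>\<mu><2*n. \<Sum>\<nu><2*n. emb (f k * (cnj (w k \<mu>) * w k \<nu>)) * (st (\<psi> \<mu>) * \<psi> \<nu>))"
    unfolding star_mode_op_mult_mode_op by (simp add: sum_distrib_left emb_mult_emb mult.assoc)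
  also have "\<dots> = (\<Sum>\<mu><2*n. \<Sum>k<K. \<Sum>\<nu><2*n. emb (f k * (cnj (w k \<mu>) * w k \<nu>)) * (st (\<psi> \<mu>) * \<psi> \<nu>))"
    by (rule sum.swap)
  also have "\<dots> = (\<Sum>\<mu><2*n. \<Sum>\<nu><2*n. \<Sum>k<K. emb (f k * (cnj (w k \<mu>) * w k \<nu>)) * (st (\<psi> \<mu>) * \<psi> \<nu>))"
    by (rule sum.cong[OF refl], rule sum.swap)
  also have "\<dots> = (\<Sum>\<mu><2*n. \<Sum>\<nu><2*n. emb (\<Sum>k<K. f k * (cnj (w k \<mu>) * w k \<nu>)) * st (\<psi> \<mu>) * \<psi> \<nu>)"
    by (simp add: sum_distrib_right emb_sum mult.assoc)
  finally show ?thesis .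
qed

definition quad_op :: "(nat \<Rightarrow> nat \<Rightarrow> complex) \<Rightarrow> complex \<Rightarrow> 'A" where
  "quad_op M c = (\<Sum>\<rho><2*n. \<Sum>\<nu><2*n. emb (M \<rho> \<nu>) * st (\<psi> \<rho>) * \<psi> \<nu>) + emb c"

lemma comm_psi_quad_op:
  assumes "\<mu> < 2*n"
  shows "comm (\<psi> \<mu>) (quad_op M c) = (\<Sum>\<nu><2*n. emb (mode_sign n \<mu> * M \<mu> \<nu>) * \<psi> \<nu>)"
proof -
  have "comm (\<psi> \<mu>) (quad_op M c)
      = (\<Sum>\<rho><2*n. \<Sum>\<nu><2*n. comm (\<psi> \<mu>) (emb (M \<rho> \<nu>) * (st (\<psi> \<rho>) * \<psi> \<nu>)))"
    unfolding quad_op_def comm_add_right comm_emb comm_sum_right by (simp add: mult.assoc)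
  also have "\<dots> = (\<Sum>\<rho><2*n. \<Sum>\<nu><2*n. emb (M \<rho> \<nu> * (if \<mu> = \<rho> then mode_sign n \<mu> else 0)) * \<psi> \<nu>)"
    by (intro sum.cong refl)
      (simp add: comm_emb_right comm_mult_right comm_psi_star_psi comm_psi_psi assms emb_mult mult.assoc)
  also have "\<dots> = (\<Sum>\<nu><2*n. \<Sum>\<rho><2*n. emb (M \<rho> \<nu> * (if \<mu> = \<rho> then mode_sign n \<mu> else 0)) * \<psi> \<nu>)"
    by (rule sum.swap)
  also have "\<dots> = (\<Sum>\<nu><2*n. emb (mode_sign n \<mu> * M \<mu> \<nu>) * \<psi> \<nu>)"
  proof (rule sum.cong[OF refl])
    fix \<nu>
    have "(\<Sum>\<rho><2*n. emb (M \<rho> \<nu> * (if \<mu> = \<rho> then mode_sign n \<mu> else 0))) = emb (mode_sign n \<mu> * M \<mu> \<nu>)"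
      unfolding emb_sum[symmetric] using assms
      by (simp add: if_distrib[of "\<lambda>x. _ * x"] cong: if_cong) (simp add: mult.commute)
    then show "(\<Sum>\<rho><2*n. emb (M \<rho> \<nu> * (if \<mu> = \<rho> then mode_sign n \<mu> else 0)) * \<psi> \<nu>)
        = emb (mode_sign n \<mu> * M \<mu> \<nu>) * \<psi> \<nu>"
      by (simp add: sum_distrib_right[symmetric])
  qed
  finally show ?thesis .
qed

lemma comm_star_psi_quad_op:
  assumes "\<mu> < 2*n"
  shows "comm (st (\<psi> \<mu>)) (quad_op M c) = (\<Sum>\<rho><2*n. emb (- mode_sign n \<mu> * M \<rho> \<mu>) * st (\<psi> \<rho>))"
proof -
  have "comm (st (\<psi> \<mu>)) (quad_op M c)
      = (\<Sum>\<rho><2*n. \<Sum>\<nu><2*n. comm (st (\<psi> \<mu>)) (emb (M \<rho> \<nu>) * (st (\<psi> \<rho>) * \<psi> \<nu>)))"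
    unfolding quad_op_def comm_add_right comm_emb comm_sum_right by (simp add: mult.assoc)
  also have "\<dots> = (\<Sum>\<rho><2*n. \<Sum>\<nu><2*n. emb (M \<rho> \<nu> * (if \<mu> = \<nu> then - mode_sign n \<mu> else 0)) * st (\<psi> \<rho>))"
    by (intro sum.cong refl)
      (simp add: comm_emb_right comm_mult_right comm_star_psi_star_psi comm_star_psi_psi assms
        emb_mult mult.assoc emb_commute[of _ "st (\<psi> _)"])
  also have "\<dots> = (\<Sum>\<rho><2*n. emb (- mode_sign n \<mu> * M \<rho> \<mu>) * st (\<psi> \<rho>))"
  proof (rule sum.cong[OF refl])
    fix \<rho>
    have "(\<Sum>\<nu><2*n. emb (M \<rho> \<nu> * (if \<mu> = \<nu> then - mode_sign n \<mu> else 0))) = emb (- mode_sign n \<mu> * M \<rho> \<mu>)"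
      unfolding emb_sum[symmetric] using assms
      by (simp add: if_distrib[of "\<lambda>x. _ * x"] cong: if_cong) (simp add: mult.commute)
    then show "(\<Sum>\<nu><2*n. emb (M \<rho> \<nu> * (if \<mu> = \<nu> then - mode_sign n \<mu> else 0)) * st (\<psi> \<rho>))
        = emb (- mode_sign n \<mu> * M \<rho> \<mu>) * st (\<psi> \<rho>)"
      by (simp add: sum_distrib_right[symmetric])
  qed
  finally show ?thesis .
qed

lemma dynamic_matrix_quad_op:
  assumes "is_dynamic_matrix emb st n a b (quad_op M c) D" "\<mu> < 2*n" "\<nu> < 2*n"
  shows "D $$ (\<mu>, \<nu>) = mode_sign n \<mu> * M \<mu> \<nu>"
proof -
  have "comm (\<psi> \<mu>) (quad_op M c) = (\<Sum>\<nu><2*n. emb (D $$ (\<mu>, \<nu>)) * \<psi> \<nu>)"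
    using assms(1,2) unfolding is_dynamic_matrix_def by blast
  then have "mode_op (\<lambda>\<nu>. D $$ (\<mu>, \<nu>)) (\<lambda>_. 0) = mode_op (\<lambda>\<nu>. mode_sign n \<mu> * M \<mu> \<nu>) (\<lambda>_. 0)"
    unfolding comm_psi_quad_op[OF assms(2)] mode_op_def by simp
  from mode_op_coeffs_eq(1)[OF this assms(3)] show ?thesis .
qed

lemma hamiltonian_matrix_terms:
  assumes F: "\<And>\<rho> \<nu>. F \<rho> \<nu> = emb (hamiltonian_matrix n \<alpha> \<epsilon> \<gamma> \<rho> \<nu>) * st (\<psi> \<rho>) * \<psi> \<nu>"
    and i: "i < n" and j: "j < n"
  shows "F i j = emb (\<alpha> i j) * st (a i) * a j"
    and "F i (n + j) = emb (\<gamma> i j) * st (a i) * st (b j)"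
    and "F (n + i) j = emb (cnj (\<gamma> i j)) * a j * b i"
    and "F (n + i) (n + j) = emb (\<epsilon> j i) * st (b j) * b i + emb (if i = j then \<epsilon> i i else 0)"
proof -
  show "F i j = emb (\<alpha> i j) * st (a i) * a j"
    using i j by (simp add: F hamiltonian_matrix_def)
  show "F i (n + j) = emb (\<gamma> i j) * st (a i) * st (b j)"
    using i j by (simp add: F hamiltonian_matrix_def)
  have "b i * a j = a j * b i" using bosonic_commutators(5)[OF j i] by (simp add: comm_def)
  then show "F (n + i) j = emb (cnj (\<gamma> i j)) * a j * b i"
    using i j by (simp add: F hamiltonian_matrix_def mult.assoc)
  have "b i * st (b j) = st (b j) * b i + emb (if i = j then 1 else 0)"
    using bosonic_commutators(2)[OF i j] by (simp add: comm_def algebra_simps)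
  then show "F (n + i) (n + j) = emb (\<epsilon> j i) * st (b j) * b i + emb (if i = j then \<epsilon> i i else 0)"
    using i j by (simp add: F hamiltonian_matrix_def mult.assoc distrib_left emb_mult[symmetric])
qed

lemma hamiltonian_eq_quad_op:
  "hamiltonian emb st n a b \<alpha> \<epsilon> \<gamma> = quad_op (hamiltonian_matrix n \<alpha> \<epsilon> \<gamma>) (- (\<Sum>i<n. \<epsilon> i i))"
proof -
  define F where "F \<rho> \<nu> = emb (hamiltonian_matrix n \<alpha> \<epsilon> \<gamma> \<rho> \<nu>) * st (\<psi> \<rho>) * \<psi> \<nu>" for \<rho> \<nu>
  note terms = hamiltonian_matrix_terms[OF F_def]
  have "quad_op (hamiltonian_matrix n \<alpha> \<epsilon> \<gamma>) (- (\<Sum>i<n. \<epsilon> i i))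
      = (\<Sum>\<rho><2*n. \<Sum>\<nu><2*n. F \<rho> \<nu>) - emb (\<Sum>i<n. \<epsilon> i i)"
    unfolding quad_op_def F_def by simp
  also have "(\<Sum>\<rho><2*n. \<Sum>\<nu><2*n. F \<rho> \<nu>) = (\<Sum>i<n. \<Sum>j<n. F i j) + (\<Sum>i<n. \<Sum>j<n. F i (n + j))
      + (\<Sum>i<n. \<Sum>j<n. F (n + i) j) + (\<Sum>i<n. \<Sum>j<n. F (n + i) (n + j))"
    unfolding sum_lessThan_double by (simp add: sum.distrib add.assoc)
  also have "(\<Sum>i<n. \<Sum>j<n. F i j) = (\<Sum>i<n. \<Sum>j<n. emb (\<alpha> i j) * st (a i) * a j)"
    by (intro sum.cong refl) (simp add: terms)
  also have "(\<Sum>i<n. \<Sum>j<n. F i (n + j)) = (\<Sum>i<n. \<Sum>j<n. emb (\<gamma> i j) * st (a i) * st (b j))"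
    by (intro sum.cong refl) (simp add: terms)
  also have "(\<Sum>i<n. \<Sum>j<n. F (n + i) j) = (\<Sum>i<n. \<Sum>j<n. emb (cnj (\<gamma> j i)) * a i * b j)"
  proof -
    have "(\<Sum>i<n. \<Sum>j<n. F (n + i) j) = (\<Sum>i<n. \<Sum>j<n. emb (cnj (\<gamma> i j)) * a j * b i)"
      by (intro sum.cong refl) (simp add: terms)
    also have "\<dots> = (\<Sum>i<n. \<Sum>j<n. emb (cnj (\<gamma> j i)) * a i * b j)" by (rule sum.swap)
    finally show ?thesis .
  qed
  also have "(\<Sum>i<n. \<Sum>j<n. F (n + i) (n + j))
      = (\<Sum>i<n. \<Sum>j<n. emb (\<epsilon> i j) * st (b i) * b j) + emb (\<Sum>i<n. \<epsilon> i i)"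
  proof -
    have "(\<Sum>i<n. \<Sum>j<n. F (n + i) (n + j))
        = (\<Sum>i<n. \<Sum>j<n. emb (\<epsilon> j i) * st (b j) * b i) + (\<Sum>i<n. \<Sum>j<n. emb (if i = j then \<epsilon> i i else 0))"
      unfolding sum.distrib[symmetric] by (intro sum.cong refl) (simp add: terms)
    also have "(\<Sum>i<n. \<Sum>j<n. emb (\<epsilon> j i) * st (b j) * b i) = (\<Sum>i<n. \<Sum>j<n. emb (\<epsilon> i j) * st (b i) * b j)"
      by (rule sum.swap)
    also have "(\<Sum>i<n. \<Sum>j<n. emb (if i = j then \<epsilon> i i else 0)) = emb (\<Sum>i<n. \<epsilon> i i)"
      by (simp add: emb_sum[symmetric] if_distrib[of emb] cong: if_cong)
    finally show ?thesis .
  qed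
  finally show ?thesis unfolding hamiltonian_def by (simp add: sum.distrib algebra_simps)
qed

lemma hamiltonian_eq_quad_op_real:
  assumes "\<forall>i<n. \<forall>j<n. \<epsilon> i j = cnj (\<epsilon> j i)"
  shows "hamiltonian emb st n a b \<alpha> \<epsilon> \<gamma>
    = quad_op (hamiltonian_matrix n \<alpha> \<epsilon> \<gamma>) (of_real (- (\<Sum>i<n. Re (\<epsilon> i i))))"
proof -
  have "\<epsilon> i i = of_real (Re (\<epsilon> i i))" if "i < n" for i
    using assms[rule_format, OF that that] by (simp add: complex_eq_iff)
  then have "- (\<Sum>i<n. \<epsilon> i i) = of_real (- (\<Sum>i<n. Re (\<epsilon> i i)))" by (simp add: sum_negf)
  then show ?thesis unfolding hamiltonian_eq_quad_op by simp
qed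

end

section \<open>Quadratic Hamiltonians and their dynamic matrices\<close>

locale quadratic_hamiltonian = bosonic_modes emb st n a b
  for emb :: "complex \<Rightarrow> 'A::ring_1" and st n a b +
  fixes M :: "nat \<Rightarrow> nat \<Rightarrow> complex" and D :: "complex mat"
  assumes M_hermitian: "\<And>\<mu> \<nu>. \<mu> < 2*n \<Longrightarrow> \<nu> < 2*n \<Longrightarrow> M \<mu> \<nu> = cnj (M \<nu> \<mu>)"
    and dynamic_carrier: "D \<in> carrier_mat (2*n) (2*n)"
    and D_eq: "\<And>\<mu> \<nu>. \<mu> < 2*n \<Longrightarrow> \<nu> < 2*n \<Longrightarrow> D $$ (\<mu>, \<nu>) = mode_sign n \<mu> * M \<mu> \<nu>"

sublocale quadratic_hamiltonian \<subseteq> krein_selfadjoint "2*n" "mode_sign n" D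
proof
  show "D \<in> carrier_mat (2*n) (2*n)" by (rule dynamic_carrier)
  show "mode_sign n \<mu> = 1 \<or> mode_sign n \<mu> = -1" for \<mu>
    by (simp add: mode_sign_def)
  show "D $$ (\<mu>, \<nu>) * mode_sign n \<nu> = cnj (D $$ (\<nu>, \<mu>) * mode_sign n \<mu>)"
    if "\<mu> < 2*n" "\<nu> < 2*n" for \<mu> \<nu>
    using that D_eq M_hermitian[of \<nu> \<mu>] by (simp add: mult_ac)
qed

context quadratic_hamiltonian
begin

lemma comm_mode_op_quad_op:
  "comm (mode_op x y) (quad_op M c)
    = mode_op (\<lambda>\<nu>. \<Sum>\<mu><2*n. x \<mu> * D $$ (\<mu>, \<nu>)) (\<lambda>\<nu>. - (\<Sum>\<mu><2*n. y \<mu> * cnj (D $$ (\<mu>, \<nu>))))"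
proof -
  have "comm (mode_op x y) (quad_op M c)
      = (\<Sum>\<mu><2*n. emb (x \<mu>) * comm (\<psi> \<mu>) (quad_op M c) + emb (y \<mu>) * comm (st (\<psi> \<mu>)) (quad_op M c))"
    unfolding mode_op_def comm_sum_left comm_add_left comm_emb_left ..
  also have "\<dots> = (\<Sum>\<mu><2*n. (\<Sum>\<nu><2*n. emb (x \<mu> * D $$ (\<mu>, \<nu>)) * \<psi> \<nu>)
      + (\<Sum>\<nu><2*n. emb (- y \<mu> * cnj (D $$ (\<mu>, \<nu>))) * st (\<psi> \<nu>)))"
  proof (rule sum.cong[OF refl])
    fix \<mu> assume "\<mu> \<in> {..<2*n}"
    then have \<mu>: "\<mu> < 2*n" by simp
    have "(\<Sum>\<nu><2*n. emb (mode_sign n \<mu> * M \<mu> \<nu>) * \<psi> \<nu>) = (\<Sum>\<nu><2*n. emb (D $$ (\<mu>, \<nu>)) * \<psi> \<nu>)"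
      using D_eq \<mu> by (intro sum.cong refl) simp
    moreover have "(\<Sum>\<nu><2*n. emb (- mode_sign n \<mu> * M \<nu> \<mu>) * st (\<psi> \<nu>))
        = (\<Sum>\<nu><2*n. emb (- cnj (D $$ (\<mu>, \<nu>))) * st (\<psi> \<nu>))"
    proof (intro sum.cong refl)
      fix \<nu> assume "\<nu> \<in> {..<2*n}"
      then have \<nu>: "\<nu> < 2*n" by simp
      show "emb (- mode_sign n \<mu> * M \<nu> \<mu>) * st (\<psi> \<nu>) = emb (- cnj (D $$ (\<mu>, \<nu>))) * st (\<psi> \<nu>)"
        using M_hermitian[OF \<nu> \<mu>] D_eq[OF \<mu> \<nu>] by simp
    qed
    ultimately show "emb (x \<mu>) * comm (\<psi> \<mu>) (quad_op M c) + emb (y \<mu>) * comm (st (\<psi> \<mu>)) (quad_op M c)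
        = (\<Sum>\<nu><2*n. emb (x \<mu> * D $$ (\<mu>, \<nu>)) * \<psi> \<nu>)
          + (\<Sum>\<nu><2*n. emb (- y \<mu> * cnj (D $$ (\<mu>, \<nu>))) * st (\<psi> \<nu>))"
      unfolding comm_psi_quad_op[OF \<mu>] comm_star_psi_quad_op[OF \<mu>]
      by (simp add: sum_distrib_left emb_mult_emb)
  qed
  also have "\<dots> = (\<Sum>\<nu><2*n. \<Sum>\<mu><2*n. emb (x \<mu> * D $$ (\<mu>, \<nu>)) * \<psi> \<nu>
      + emb (- y \<mu> * cnj (D $$ (\<mu>, \<nu>))) * st (\<psi> \<nu>))"
    unfolding sum.distrib[symmetric] by (rule sum.swap)
  also have "\<dots> = mode_op (\<lambda>\<nu>. \<Sum>\<mu><2*n. x \<mu> * D $$ (\<mu>, \<nu>)) (\<lambda>\<nu>. - (\<Sum>\<mu><2*n. y \<mu> * cnj (D $$ (\<mu>, \<nu>))))"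
    unfolding mode_op_def
    by (rule sum.cong[OF refl]) (simp add: sum_subtractf emb_sum sum_distrib_right sum_negf)
  finally show ?thesis .
qed

lemma left_eigvecs_of_eigenmode:
  assumes "comm (mode_op x y) (quad_op M c) = emb (of_real lam) * mode_op x y"
  shows "left_eigvec x lam" "left_eigvec (\<lambda>\<mu>. cnj (y \<mu>)) (- lam)"
proof -
  have coeffs: "mode_op (\<lambda>\<nu>. \<Sum>\<mu><2*n. x \<mu> * D $$ (\<mu>, \<nu>)) (\<lambda>\<nu>. - (\<Sum>\<mu><2*n. y \<mu> * cnj (D $$ (\<mu>, \<nu>))))
      = mode_op (\<lambda>\<nu>. of_real lam * x \<nu>) (\<lambda>\<nu>. of_real lam * y \<nu>)"
    using assms unfolding comm_mode_op_quad_op emb_mult_mode_op .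
  show "left_eigvec x lam" unfolding left_eigvec_def using mode_op_coeffs_eq(1)[OF coeffs] by blast
  have "(\<Sum>\<mu><2*n. cnj (y \<mu>) * D $$ (\<mu>, \<nu>)) = of_real (- lam) * cnj (y \<nu>)" if \<nu>: "\<nu> < 2*n" for \<nu>
  proof -
    have "- (\<Sum>\<mu><2*n. y \<mu> * cnj (D $$ (\<mu>, \<nu>))) = of_real lam * y \<nu>"
      using mode_op_coeffs_eq(2)[OF coeffs \<nu>] by simp
    then have "cnj (\<Sum>\<mu><2*n. y \<mu> * cnj (D $$ (\<mu>, \<nu>))) = - cnj (of_real lam * y \<nu>)"
      by (metis complex_cnj_minus minus_minus)
    then show ?thesis by simp
  qed
  then show "left_eigvec (\<lambda>\<mu>. cnj (y \<mu>)) (- lam)" unfolding left_eigvec_def by blast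
qed

lemma bogoliubov_modes_if_BV:
  assumes "BV_diagonalizable emb st n a b (quad_op M c)"
  shows "\<exists>(X :: nat \<Rightarrow> nat \<Rightarrow> complex) (Y :: nat \<Rightarrow> nat \<Rightarrow> complex) (lam :: nat \<Rightarrow> real).
    (\<forall>k<2*n. left_eigvec (X k) (lam k)) \<and>
    (\<forall>k<2*n. left_eigvec (\<lambda>\<mu>. cnj (Y k \<mu>)) (- lam k)) \<and>
    (\<forall>k<2*n. \<forall>l<2*n. (\<Sum>\<mu><2*n. mode_sign n \<mu> * (X k \<mu> * cnj (X l \<mu>) - Y k \<mu> * cnj (Y l \<mu>)))
       = (if k = l then 1 else 0)) \<and>
    (\<forall>k<2*n. \<forall>l<2*n. (\<Sum>\<mu><2*n. mode_sign n \<mu> * (X k \<mu> * Y l \<mu> - Y k \<mu> * X l \<mu>)) = 0)"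
proof -
  from assms obtain e lam C where
    span: "\<forall>k<2*n. in_mode_span emb st n a b (e k)" and
    rel: "\<forall>k<2*n. \<forall>l<2*n. comm (e k) (st (e l)) = kdelta k l \<and> comm (e k) (e l) = 0" and
    H: "quad_op M c = (\<Sum>k<2*n. emb (complex_of_real (lam k)) * st (e k) * e k) + emb (complex_of_real C)"
    unfolding BV_diagonalizable_def by blast
  have "\<forall>k<2*n. \<exists>xy. e k = mode_op (fst xy) (snd xy)" using span in_mode_span_iff by fastforce
  then obtain XY where XY: "\<forall>k<2*n. e k = mode_op (fst (XY k)) (snd (XY k))" by metis
  define X where "X k = fst (XY k)" for k
  define Y where "Y k = snd (XY k)" for k
  have e: "e k = mode_op (X k) (Y k)" if "k < 2*n" for k using XY that unfolding X_def Y_def by blast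
  have orthonormal: "(\<Sum>\<mu><2*n. mode_sign n \<mu> * (X k \<mu> * cnj (X l \<mu>) - Y k \<mu> * cnj (Y l \<mu>)))
      = (if k = l then 1 else 0)" if "k < 2*n" "l < 2*n" for k l
  proof -
    have "comm (e k) (st (e l)) = kdelta k l" using rel that by blast
    then show ?thesis unfolding e[OF that(1)] e[OF that(2)] comm_mode_op_star_mode_op kdelta_eq_emb emb_eq_iff .
  qed
  have symplectic: "(\<Sum>\<mu><2*n. mode_sign n \<mu> * (X k \<mu> * Y l \<mu> - Y k \<mu> * X l \<mu>)) = 0"
    if "k < 2*n" "l < 2*n" for k l
    using rel that e unfolding comm_mode_op_mode_op[symmetric] emb_eq_0_iff[symmetric] by simp
  have eigen: "left_eigvec (X k) (lam k) \<and> left_eigvec (\<lambda>\<mu>. cnj (Y k \<mu>)) (- lam k)" if k: "k < 2*n" for k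
  proof -
    have "comm (e k) (quad_op M c) = emb (of_real (lam k)) * e k"
      unfolding H by (rule comm_diagonal_form[OF rel k])
    then show ?thesis using left_eigvecs_of_eigenmode unfolding e[OF k] by blast
  qed
  show ?thesis
    by (intro exI[of _ X] exI[of _ Y] exI[of _ lam]) (use eigen orthonormal symplectic in auto)
qed

lemma krein_eigenbasis_if_BV:
  assumes "BV_diagonalizable emb st n a b (quad_op M c)"
  shows "\<exists>w l. krein_eigenbasis w l"
proof -
  obtain X Y lam where X: "\<forall>k<2*n. left_eigvec (X k) (lam k)"
    and Y: "\<forall>k<2*n. left_eigvec (\<lambda>\<mu>. cnj (Y k \<mu>)) (- lam k)"
    and orthonormal: "\<forall>k<2*n. \<forall>l<2*n. (\<Sum>\<mu><2*n. mode_sign n \<mu> * (X k \<mu> * cnj (X l \<mu>) - Y k \<mu> * cnj (Y l \<mu>)))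
       = (if k = l then 1 else 0)"
    and symplectic: "\<forall>k<2*n. \<forall>l<2*n. (\<Sum>\<mu><2*n. mode_sign n \<mu> * (X k \<mu> * Y l \<mu> - Y k \<mu> * X l \<mu>)) = 0"
    using bogoliubov_modes_if_BV[OF assms] by blast
  define f where "f k = (if k < 2*n then X k else (\<lambda>\<mu>. cnj (Y (k - 2*n) \<mu>)))" for k
  define g where "g k p = (if k < 2*n then mode_sign n p * cnj (X k p) else - (mode_sign n p * Y (k - 2*n) p))" for k p
  have eigen: "\<exists>l. left_eigvec (f k) l" if "k < 2*(2*n)" for k
  proof (cases "k < 2*n")
    case True
    then show ?thesis using X unfolding f_def by auto
  next
    case False
    then have "k - 2*n < 2*n" using that by simp
    then show ?thesis using False Y unfolding f_def by auto
  qed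
  have "in_span (f ` {..<2*(2*n)}) v" for v
  proof (rule in_span_of_resolution[where g = g])
    fix p q assume p: "p < 2*n" and q: "q < 2*n"
    have "(\<Sum>k<2*(2*n). g k p * f k q)
        = (\<Sum>k<2*n. mode_sign n p * cnj (X k p) * X k q - mode_sign n p * Y k p * cnj (Y k q))"
      unfolding sum_lessThan_double by (simp add: f_def g_def sum_subtractf sum_negf)
    also have "\<dots> = (if p = q then 1 else 0)"
      by (rule bogoliubov_completeness[OF _ orthonormal symplectic p q]) simp
    finally show "(\<Sum>k<2*(2*n). g k p * f k q) = (if p = q then 1 else 0)" .
  qed
  then show ?thesis using krein_eigenbasis_exists[of "f ` {..<2*(2*n)}"] eigen by auto
qed

definition normal_mode :: "(nat \<Rightarrow> complex) \<Rightarrow> 'A" where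
  "normal_mode x = (if kip x x = 1 then mode_op x (\<lambda>_. 0) else st (mode_op x (\<lambda>_. 0)))"

lemma comm_mode_op_star_mode_op_kip:
  "comm (mode_op x (\<lambda>_. 0)) (st (mode_op y (\<lambda>_. 0))) = emb (kip x y)"
  unfolding comm_mode_op_star_mode_op kip_def by (simp add: mult_ac)

lemma comm_normal_modes:
  assumes B: "krein_eigenbasis w l" and k: "k < 2*n" and k': "k' < 2*n"
  shows "comm (normal_mode (w k)) (st (normal_mode (w k'))) = kdelta k k'
    \<and> comm (normal_mode (w k)) (normal_mode (w k')) = 0"
proof -
  define s where "s k = kip (w k) (w k)" for k
  define u where "u k = mode_op (w k) (\<lambda>_. 0)" for k
  have e: "normal_mode (w k) = (if s k = 1 then u k else st (u k))" for k
    unfolding normal_mode_def s_def u_def ..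
  have cu: "comm (u k) (st (u k')) = emb (kip (w k) (w k'))" for k k'
    unfolding u_def by (rule comm_mode_op_star_mode_op_kip)
  have cuu: "comm (u k) (u k') = 0" for k k'
    unfolding u_def comm_mode_op_mode_op by simp
  have s: "s k = 1 \<or> s k = -1" if "k < 2*n" for k
    using B that unfolding krein_eigenbasis_def s_def by blast
  have kip_w: "kip (w k) (w k') = (if k = k' then s k else 0)" if "k < 2*n" "k' < 2*n" for k k'
    using B that unfolding krein_eigenbasis_def s_def by auto
  have swap: "comm (st (u k)) (u k') = - comm (u k') (st (u k))" for k k' by (rule comm_swap)
  have "k \<noteq> k'" if "s k \<noteq> s k'" using that by auto
  then show ?thesis
    using s[OF k] s[OF k'] cu cuu kip_w[OF k k'] kip_w[OF k' k] swap comm_star[of "u k" "u k'"]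
    unfolding e kdelta_eq_emb by auto
qed

lemma normal_mode_number:
  assumes "kip x x = 1 \<or> kip x x = -1"
  shows "emb (of_real (if kip x x = 1 then l else - l)) * st (normal_mode x) * normal_mode x
    = emb (kip x x * of_real l) * (st (mode_op x (\<lambda>_. 0)) * mode_op x (\<lambda>_. 0))
      + emb (of_real (if kip x x = 1 then 0 else l))"
proof (cases "kip x x = 1")
  case True
  then show ?thesis unfolding normal_mode_def by (simp add: mult.assoc)
next
  case False
  then have x: "kip x x = -1" using assms by auto
  define u where "u = mode_op x (\<lambda>_. 0)"
  have "u * st u = st u * u + comm u (st u)" by (simp add: comm_def)
  also have "comm u (st u) = - 1" unfolding u_def comm_mode_op_star_mode_op_kip x by simp
  finally have "u * st u = st u * u - 1" by simp
  then show ?thesis using False x unfolding normal_mode_def u_def[symmetric]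
    by (simp add: mult.assoc right_diff_distrib)
qed

lemma BV_if_krein_eigenbasis:
  assumes B: "krein_eigenbasis w l"
  shows "BV_diagonalizable emb st n a b (quad_op M (of_real c))"
proof -
  define s where "s k = kip (w k) (w k)" for k
  define e where "e k = normal_mode (w k)" for k
  define lam where "lam k = (if s k = 1 then l k else - l k)" for k
  define L where "L = (\<Sum>k<2*n. if s k = 1 then 0 else l k)"
  have number: "emb (of_real (lam k)) * st (e k) * e k
      = emb (s k * of_real (l k)) * (st (mode_op (w k) (\<lambda>_. 0)) * mode_op (w k) (\<lambda>_. 0))
        + emb (of_real (if s k = 1 then 0 else l k))" if "k < 2*n" for k
    using normal_mode_number[of "w k" "l k"] B that
    unfolding e_def lam_def s_def krein_eigenbasis_def by blast
  have M_decomposition: "M \<mu> \<nu> = (\<Sum>k<2*n. s k * of_real (l k) * (cnj (w k \<mu>) * w k \<nu>))"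
    if \<mu>: "\<mu> < 2*n" and \<nu>: "\<nu> < 2*n" for \<mu> \<nu>
  proof -
    have "M \<mu> \<nu> = mode_sign n \<mu> * D $$ (\<mu>, \<nu>)" using D_eq[OF \<mu> \<nu>] by (simp add: mult.assoc[symmetric])
    also have "\<dots> = (\<Sum>k<2*n. (mode_sign n \<mu> * mode_sign n \<mu>) * (s k * of_real (l k) * (cnj (w k \<mu>) * w k \<nu>)))"
      unfolding krein_eigenbasis_decomposition[OF B \<mu> \<nu>] s_def
      by (simp add: sum_distrib_left mult_ac del: mode_sign_square)
    finally show ?thesis by simp
  qed
  have "(\<Sum>k<2*n. emb (of_real (lam k)) * st (e k) * e k)
     = (\<Sum>k<2*n. emb (s k * of_real (l k)) * (st (mode_op (w k) (\<lambda>_. 0)) * mode_op (w k) (\<lambda>_. 0)))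
       + emb (of_real L)"
    by (simp add: number sum.distrib L_def emb_sum)
  also have "(\<Sum>k<2*n. emb (s k * of_real (l k)) * (st (mode_op (w k) (\<lambda>_. 0)) * mode_op (w k) (\<lambda>_. 0)))
     = (\<Sum>\<mu><2*n. \<Sum>\<nu><2*n. emb (M \<mu> \<nu>) * st (\<psi> \<mu>) * \<psi> \<nu>)"
    unfolding sum_number_ops using M_decomposition by (intro sum.cong refl) simp
  finally have "quad_op M (of_real c) = (\<Sum>k<2*n. emb (of_real (lam k)) * st (e k) * e k) + emb (of_real (c - L))"
    unfolding quad_op_def by (simp add: algebra_simps)
  moreover have "\<forall>k<2*n. in_mode_span emb st n a b (e k)"
    unfolding e_def normal_mode_def star_mode_op in_mode_span_iff by auto
  moreover have "\<forall>k<2*n. \<forall>k'<2*n. comm (e k) (st (e k')) = kdelta k k' \<and> comm (e k) (e k') = 0"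
    unfolding e_def using comm_normal_modes[OF B] by blast
  ultimately show ?thesis unfolding BV_diagonalizable_def by blast
qed

lemma BV_diagonalizable_iff:
  "BV_diagonalizable emb st n a b (quad_op M (of_real c)) \<longleftrightarrow> physically_diagonalizable D"
  unfolding physically_diagonalizable_iff_krein_eigenbasis
  using krein_eigenbasis_if_BV BV_if_krein_eigenbasis by blast

end

theorem proposition5:
  fixes emb :: "complex \<Rightarrow> 'A::ring_1" and st :: "'A \<Rightarrow> 'A"
    and n :: nat and a b :: "nat \<Rightarrow> 'A"
    and \<alpha> \<epsilon> \<gamma> :: "nat \<Rightarrow> nat \<Rightarrow> complex" and D :: "complex mat"
  assumes alg: "complex_star_algebra emb st"
    and nontriv: "(1::'A) \<noteq> 0"
    and bos: "bosonic_families emb st n a b"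
    and herm_alpha: "\<forall>i<n. \<forall>j<n. \<alpha> i j = cnj (\<alpha> j i)"
    and herm_eps: "\<forall>i<n. \<forall>j<n. \<epsilon> i j = cnj (\<epsilon> j i)"
    and sym_gamma: "\<forall>i<n. \<forall>j<n. \<gamma> i j = \<gamma> j i"
    and dyn: "is_dynamic_matrix emb st n a b (hamiltonian emb st n a b \<alpha> \<epsilon> \<gamma>) D"
  shows "BV_diagonalizable emb st n a b (hamiltonian emb st n a b \<alpha> \<epsilon> \<gamma>)
         \<longleftrightarrow> physically_diagonalizable D"
proof -
  have modes: "bosonic_modes emb st n a b"
    by unfold_locales (rule alg, rule nontriv, rule bos)
  interpret bosonic_modes emb st n a b by (rule modes)
  define M where "M = hamiltonian_matrix n \<alpha> \<epsilon> \<gamma>"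
  have H: "hamiltonian emb st n a b \<alpha> \<epsilon> \<gamma> = quad_op M (of_real (- (\<Sum>i<n. Re (\<epsilon> i i))))"
    unfolding M_def by (rule hamiltonian_eq_quad_op_real[OF herm_eps])
  have M_herm: "M \<mu> \<nu> = cnj (M \<nu> \<mu>)" if "\<mu> < 2*n" "\<nu> < 2*n" for \<mu> \<nu>
    unfolding M_def using hamiltonian_matrix_hermitian[OF herm_alpha herm_eps sym_gamma that] .
  have D_carrier: "D \<in> carrier_mat (2*n) (2*n)" using dyn unfolding is_dynamic_matrix_def by blast
  have D_eq: "D $$ (\<mu>, \<nu>) = mode_sign n \<mu> * M \<mu> \<nu>" if "\<mu> < 2*n" "\<nu> < 2*n" for \<mu> \<nu>
    using dynamic_matrix_quad_op[OF dyn[unfolded H] that] .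
  interpret quadratic_hamiltonian emb st n a b M D
    by (rule quadratic_hamiltonian.intro[OF modes quadratic_hamiltonian_axioms.intro[OF M_herm D_carrier D_eq]])
  show ?thesis unfolding H by (rule BV_diagonalizable_iff)
qed

end
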